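(* Let $f:G\to H$ be an epimorphism of finitely generated groups. Then the induced epimorphism $f_{RF}:RF(G)\to RF(H)$ is an isomorphism if and only if the induced epimorphism $f_{na}:RF_{na}(G)\to RF_{na}(H)$ is an isomorphism and $b_1(G)=b_1(H)$.
   Context: $\mathbb F$ denotes a non-abelian free group. $RF(G)$ is the quotient of $G$ by the intersection of the kernels of all homomorphisms $G\to\mathbb F$; $RF_{na}(G)$ is the quotient of $G$ by the intersection of the kernels of all homomorphisms $G\to\mathbb F$ with non-abelian image. An epimorphism $f:G\to H$ induces epimorphisms $RF(G)\to RF(H)$ and $RF_{na}(G)\to RF_{na}(H)$. $b_1(G)$ is the torsion-free rank of $H_1(G,\mathbb Z)$. *)

theory Defs
  imports "HOL-Algebra.Algebra"
begin

text \<open>A letter is a pair (generator, inverted?); there are two generators (type bool).\<close>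
type_synonym letter = "bool \<times> bool"

definition inv_letter :: "letter \<Rightarrow> letter" where
  "inv_letter a = (fst a, \<not> snd a)"

fun reduced_word :: "letter list \<Rightarrow> bool" where
  "reduced_word [] = True"
| "reduced_word [a] = True"
| "reduced_word (a # b # w) = (b \<noteq> inv_letter a \<and> reduced_word (b # w))"

definition cons_red :: "letter \<Rightarrow> letter list \<Rightarrow> letter list" where
  "cons_red a w = (case w of [] \<Rightarrow> [a]
                    | b # w' \<Rightarrow> (if b = inv_letter a then w' else a # w))"

definition F2 :: "letter list monoid" where
  "F2 = \<lparr>carrier = {w. reduced_word w}, monoid.mult = (\<lambda>x y. foldr cons_red x y), one = []\<rparr>"

definition RF_kernel :: "('a, 'b) monoid_scheme \<Rightarrow> 'a set" where
  "RF_kernel G = carrier G \<inter> (\<Inter>h \<in> hom G F2. kernel G F2 h)"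

definition nonabelian_image :: "('a, 'b) monoid_scheme \<Rightarrow> ('a \<Rightarrow> letter list) \<Rightarrow> bool" where
  "nonabelian_image G h =
     (\<exists>x \<in> carrier G. \<exists>y \<in> carrier G. h x \<otimes>\<^bsub>F2\<^esub> h y \<noteq> h y \<otimes>\<^bsub>F2\<^esub> h x)"

definition RFna_kernel :: "('a, 'b) monoid_scheme \<Rightarrow> 'a set" where
  "RFna_kernel G = carrier G \<inter>
     (\<Inter>h \<in> {h \<in> hom G F2. nonabelian_image G h}. kernel G F2 h)"

definition RF :: "('a, 'b) monoid_scheme \<Rightarrow> 'a set monoid" where
  "RF G = G Mod (RF_kernel G)"

definition RFna :: "('a, 'b) monoid_scheme \<Rightarrow> 'a set monoid" where
  "RFna G = G Mod (RFna_kernel G)"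

definition induced_quot ::
  "('a, 'b) monoid_scheme \<Rightarrow> ('c, 'd) monoid_scheme \<Rightarrow> 'a set \<Rightarrow> 'c set \<Rightarrow> ('a \<Rightarrow> 'c)
     \<Rightarrow> 'a set \<Rightarrow> 'c set" where
  "induced_quot G H K L f = (\<lambda>C. L #>\<^bsub>H\<^esub> f (SOME g. g \<in> C \<and> g \<in> carrier G))"

definition f_RF :: "('a, 'b) monoid_scheme \<Rightarrow> ('c, 'd) monoid_scheme \<Rightarrow> ('a \<Rightarrow> 'c)
     \<Rightarrow> 'a set \<Rightarrow> 'c set" where
  "f_RF G H f = induced_quot G H (RF_kernel G) (RF_kernel H) f"

definition f_na :: "('a, 'b) monoid_scheme \<Rightarrow> ('c, 'd) monoid_scheme \<Rightarrow> ('a \<Rightarrow> 'c)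
     \<Rightarrow> 'a set \<Rightarrow> 'c set" where
  "f_na G H f = induced_quot G H (RFna_kernel G) (RFna_kernel H) f"

definition finitely_generated :: "('a, 'b) monoid_scheme \<Rightarrow> bool" where
  "finitely_generated G = (\<exists>S. finite S \<and> S \<subseteq> carrier G \<and> generate G S = carrier G)"

text \<open>H_1(G,Z) is the abelianization G/[G,G].\<close>
definition abelianization :: "('a, 'b) monoid_scheme \<Rightarrow> 'a set monoid" where
  "abelianization G = G Mod (derived G (carrier G))"

definition Z_independent :: "('a, 'b) monoid_scheme \<Rightarrow> 'a set \<Rightarrow> bool" where
  "Z_independent A S = (\<forall>c :: 'a \<Rightarrow> int.
      finprod A (\<lambda>s. s [^]\<^bsub>A\<^esub> c s) S = \<one>\<^bsub>A\<^esub> \<longrightarrow> (\<forall>s \<in> S. c s = 0))"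

definition torsion_free_rank :: "('a, 'b) monoid_scheme \<Rightarrow> nat" where
  "torsion_free_rank A =
     Sup (card ` {S. finite S \<and> S \<subseteq> carrier A \<and> Z_independent A S})"

definition b1 :: "('a, 'b) monoid_scheme \<Rightarrow> nat" where
  "b1 G = torsion_free_rank (abelianization G)"

end

theory Submission
  imports Defs
begin

text \<open>
  Write "\<phi> kills ker f" when the
  homomorphism \<phi> : G \<rightarrow> F2 vanishes on the kernel of f.

  (1) Transfer: for a family of homomorphisms to F2 that is stable under precomposition with f
  and under factorisation through f, the map induced by f on the quotients by the joint kernels
  is an isomorphism iff every member of the family kills ker f.  Applied to all homomorphisms
  and to those with non-abelian image this characterises when f_RF and f_na are isomorphisms.

  (2) A homomorphism G \<rightarrow> F2 with abelian image factors through the abelianization; since F2 is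
  torsion-free, all of them kill k iff the image of k in G^ab has finite order (an element of
  infinite order in a finitely generated abelian group is detected by an additive map to Z).

  (3) b1 G = b1 H iff the kernel of the induced map G^ab \<rightarrow> H^ab is torsion, i.e. iff ker f maps
  to torsion elements of G^ab; this rests on a Steinitz-type bound for independent families.

  Hence f_RF is an isomorphism iff both the non-abelian and the abelian homomorphisms kill ker f,
  i.e. iff f_na is an isomorphism and b1 G = b1 H.
\<close>

section \<open>The free group F2 is torsion-free\<close>

lemma inv_inv_letter [simp]: "inv_letter (inv_letter a) = a"
  by (simp add: inv_letter_def)

lemma inv_letter_neq [simp]: "inv_letter a \<noteq> a" "a \<noteq> inv_letter a"
  by (cases a; simp add: inv_letter_def)+

lemma reduced_Cons_iff:
  "reduced_word (a # w) \<longleftrightarrow> reduced_word w \<and> (w \<noteq> [] \<longrightarrow> hd w \<noteq> inv_letter a)"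
  by (cases w) auto

lemma reduced_append:
  "reduced_word (xs @ ys) \<longleftrightarrow> reduced_word xs \<and> reduced_word ys \<and>
     (xs \<noteq> [] \<longrightarrow> ys \<noteq> [] \<longrightarrow> hd ys \<noteq> inv_letter (last xs))"
proof (induction xs)
  case (Cons a xs)
  then show ?case by (cases "xs = []") (auto simp: reduced_Cons_iff)
qed simp

lemma cons_red_reduced: "reduced_word w \<Longrightarrow> reduced_word (cons_red a w)"
  by (cases w) (auto simp: cons_red_def reduced_Cons_iff)

lemma foldr_reduced: "reduced_word y \<Longrightarrow> reduced_word (foldr cons_red x y)"
  by (induction x) (auto intro: cons_red_reduced)

lemma cons_red_cancel: "reduced_word w \<Longrightarrow> cons_red a (cons_red (inv_letter a) w) = w"
  by (cases w; cases "tl w") (auto simp: cons_red_def reduced_Cons_iff)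

lemma foldr_cons_red:
  "reduced_word z \<Longrightarrow> foldr cons_red (cons_red a w) z = cons_red a (foldr cons_red w z)"
proof (cases w)
  case (Cons b w')
  assume z: "reduced_word z"
  show ?thesis
  proof (cases "b = inv_letter a")
    case True
    then have "cons_red a (cons_red b (foldr cons_red w' z)) = foldr cons_red w' z"
      using cons_red_cancel foldr_reduced z by blast
    then show ?thesis using Cons True by (simp add: cons_red_def)
  qed (use Cons in \<open>simp add: cons_red_def\<close>)
qed (simp add: cons_red_def)

lemma foldr_assoc:
  "reduced_word z \<Longrightarrow> foldr cons_red (foldr cons_red x y) z = foldr cons_red x (foldr cons_red y z)"
  by (induction x) (auto simp: foldr_cons_red)

lemma foldr_inv: "reduced_word x \<Longrightarrow> foldr cons_red (rev (map inv_letter x)) x = []"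
proof (induction x)
  case (Cons a x)
  have "cons_red (inv_letter a) (a # x) = x" by (simp add: cons_red_def)
  with Cons show ?case by (simp add: reduced_Cons_iff)
qed simp

lemma F2_group: "group F2"
proof (rule groupI)
  fix x assume x: "x \<in> carrier F2"
  let ?y = "foldr cons_red (rev (map inv_letter x)) []"
  have "?y \<otimes>\<^bsub>F2\<^esub> x = []"
    using x by (simp add: F2_def foldr_assoc foldr_inv)
  then show "\<exists>y\<in>carrier F2. y \<otimes>\<^bsub>F2\<^esub> x = \<one>\<^bsub>F2\<^esub>"
    by (intro bexI[of _ ?y]) (auto simp: F2_def foldr_reduced)
qed (auto simp: F2_def foldr_reduced foldr_assoc)

interpretation F2: group F2 by (rule F2_group)

lemma F2_simps:
  "carrier F2 = {w. reduced_word w}" "x \<otimes>\<^bsub>F2\<^esub> y = foldr cons_red x y" "\<one>\<^bsub>F2\<^esub> = []"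
  by (auto simp: F2_def)

lemma mult_concat: "reduced_word (x @ y) \<Longrightarrow> foldr cons_red x y = x @ y"
proof (induction x)
  case (Cons a x)
  then show ?case by (cases "x @ y") (auto simp: cons_red_def reduced_Cons_iff)
qed simp

lemma cyclic_decomposition:
  "reduced_word x \<Longrightarrow> x \<noteq> [] \<Longrightarrow>
   \<exists>u v. v \<noteq> [] \<and> hd v \<noteq> inv_letter (last v) \<and> x = u @ v @ rev (map inv_letter u)"
proof (induction "length x" arbitrary: x rule: less_induct)
  case less
  show ?case
  proof (cases "hd x \<noteq> inv_letter (last x)")
    case True
    then show ?thesis using less.prems by (intro exI[of _ "[]"] exI[of _ x]) auto
  next
    case False
    obtain a y where x: "x = a # y" using less.prems by (cases x) auto
    then obtain m where y: "y = m @ [inv_letter a]"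
      using False by (cases y rule: rev_cases) auto
    have "m \<noteq> []" "reduced_word m"
      using less.prems(1) x y by (auto simp: reduced_Cons_iff reduced_append)
    from less.hyps[OF _ this(2,1)] x y obtain u v where
      "v \<noteq> []" "hd v \<noteq> inv_letter (last v)" "m = u @ v @ rev (map inv_letter u)"
      by auto
    then show ?thesis using x y by (intro exI[of _ "a # u"] exI[of _ v]) auto
  qed
qed

lemma concat_replicate_snoc: "concat (replicate k v) @ v = concat (replicate (Suc k) v)"
  by (induction k) auto

lemma cyclically_reduced_power:
  assumes "v \<noteq> []" "reduced_word v" "hd v \<noteq> inv_letter (last v)"
  shows "reduced_word (concat (replicate (Suc n) v))"
    and "v [^]\<^bsub>F2\<^esub> (Suc n) = concat (replicate (Suc n) v)"
proof -
  show red: "reduced_word (concat (replicate (Suc k) v))" for k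
  proof (induction k)
    case (Suc k)
    have "hd (concat (replicate (Suc k) v)) = hd v" using assms(1) by simp
    with Suc assms show ?case
      by (simp only: concat.simps replicate_Suc reduced_append) auto
  qed (use assms in simp)
  show "v [^]\<^bsub>F2\<^esub> (Suc n) = concat (replicate (Suc n) v)"
  proof (induction n)
    case 0
    then show ?case using assms(2) by (simp add: F2_simps)
  next
    case (Suc n)
    note eq = concat_replicate_snoc[of "Suc n" v]
    have "v [^]\<^bsub>F2\<^esub> Suc (Suc n) = concat (replicate (Suc n) v) \<otimes>\<^bsub>F2\<^esub> v"
      using Suc by simp
    also have "\<dots> = concat (replicate (Suc (Suc n)) v)"
      unfolding F2_simps eq[symmetric] by (rule mult_concat) (simp only: eq red)
    finally show ?case .
  qed
qed

lemma (in group) conj_pow: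
  "u \<in> carrier G \<Longrightarrow> v \<in> carrier G \<Longrightarrow> (u \<otimes> v \<otimes> inv u) [^] (n::nat) = u \<otimes> v [^] n \<otimes> inv u"
proof (induction n)
  case (Suc n)
  have cancel: "inv u \<otimes> (u \<otimes> y) = y" if "y \<in> carrier G" for y
    using that Suc.prems by (simp add: m_assoc[symmetric])
  have "(u \<otimes> v \<otimes> inv u) [^] Suc n = (u \<otimes> v [^] n \<otimes> inv u) \<otimes> (u \<otimes> v \<otimes> inv u)"
    using Suc by simp
  also have "\<dots> = u \<otimes> (v [^] n \<otimes> v) \<otimes> inv u"
    using Suc.prems cancel by (simp add: m_assoc)
  finally show ?case by simp
qed simp

lemma reduced_replace_middle:
  assumes "reduced_word (u @ v @ w)" "v \<noteq> []" "V \<noteq> []" "reduced_word V"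
    and "hd V = hd v" "last V = last v"
  shows "reduced_word (u @ V @ w)"
proof -
  have u: "reduced_word u" and vw: "reduced_word (v @ w)"
    and uvw: "u \<noteq> [] \<longrightarrow> hd v \<noteq> inv_letter (last u)"
    using assms(1,2) reduced_append[of u "v @ w"] by auto
  have "reduced_word w" and "w \<noteq> [] \<longrightarrow> hd w \<noteq> inv_letter (last v)"
    using vw assms(2) reduced_append[of v w] by auto
  then have "reduced_word (V @ w)"
    using assms(3-6) reduced_append[of V w] by simp
  then show ?thesis
    using u uvw assms(3,5) reduced_append[of u "V @ w"] by simp
qed

definition torsion_free :: "('a, 'b) monoid_scheme \<Rightarrow> bool" where
  "torsion_free T \<longleftrightarrow> (\<forall>x \<in> carrier T. \<forall>n::int. n \<noteq> 0 \<longrightarrow> x [^]\<^bsub>T\<^esub> n = \<one>\<^bsub>T\<^esub> \<longrightarrow> x = \<one>\<^bsub>T\<^esub>)"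

lemma torsion_freeD:
  "torsion_free T \<Longrightarrow> x \<in> carrier T \<Longrightarrow> n \<noteq> 0 \<Longrightarrow> x [^]\<^bsub>T\<^esub> (n::int) = \<one>\<^bsub>T\<^esub> \<Longrightarrow> x = \<one>\<^bsub>T\<^esub>"
  unfolding torsion_free_def by blast

lemma (in group) torsion_freeI:
  assumes "\<And>x n. x \<in> carrier G \<Longrightarrow> 0 < n \<Longrightarrow> x [^] (n::nat) = \<one> \<Longrightarrow> x = \<one>"
  shows "torsion_free G"
  unfolding torsion_free_def
proof (intro ballI allI impI)
  fix x and n :: int assume x: "x \<in> carrier G" and n: "n \<noteq> 0" and e: "x [^] n = \<one>"
  have "(if n < 0 then inv (x [^] nat (- n)) else x [^] nat n) = \<one>"
    using e by (simp only: int_pow_def2)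
  then have "x [^] nat \<bar>n\<bar> = \<one>"
    using x by (cases "n < 0") simp_all
  moreover have "0 < nat \<bar>n\<bar>" using n by simp
  ultimately show "x = \<one>" using assms[OF x] by blast
qed

lemma conjugate_cyclically_reduced_power:
  fixes u v :: "letter list"
  defines "iu \<equiv> rev (map inv_letter u)"
  assumes x: "reduced_word (u @ v @ iu)" and v: "v \<noteq> []" "hd v \<noteq> inv_letter (last v)"
  shows "(u @ v @ iu) [^]\<^bsub>F2\<^esub> (Suc m) = u @ concat (replicate (Suc m) v) @ iu"
proof -
  have ru: "reduced_word u" and rv: "reduced_word v" and rviu: "reduced_word (v @ iu)"
    using x v(1) unfolding reduced_append by auto
  have uc: "u \<in> carrier F2" and vc: "v \<in> carrier F2" and iuc: "iu \<in> carrier F2"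
    using ru rv rviu by (auto simp: F2_simps reduced_append)
  have invu: "inv\<^bsub>F2\<^esub> u = iu"
    using F2.inv_equality[of iu u] uc iuc foldr_inv[OF ru] by (simp add: F2_simps iu_def)
  have "u @ v @ iu = u \<otimes>\<^bsub>F2\<^esub> (v \<otimes>\<^bsub>F2\<^esub> iu)"
    using x rviu unfolding F2_simps by (simp add: mult_concat)
  also have "\<dots> = u \<otimes>\<^bsub>F2\<^esub> v \<otimes>\<^bsub>F2\<^esub> inv\<^bsub>F2\<^esub> u"
    using uc vc iuc invu by (simp add: F2.m_assoc)
  finally have "(u @ v @ iu) [^]\<^bsub>F2\<^esub> Suc m = u \<otimes>\<^bsub>F2\<^esub> v [^]\<^bsub>F2\<^esub> Suc m \<otimes>\<^bsub>F2\<^esub> iu"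
    using F2.conj_pow[OF uc vc, of "Suc m"] invu by simp
  define V where "V = concat (replicate (Suc m) v)"
  note V = cyclically_reduced_power[OF v(1) rv v(2), of m, folded V_def]
  have V_snoc: "V = concat (replicate m v) @ v"
    unfolding V_def by (rule concat_replicate_snoc[symmetric])
  have hV: "V \<noteq> []" "hd V = hd v" "last V = last v"
    using v(1) by (simp add: V_def, simp add: V_def, simp add: V_snoc)
  have "reduced_word (u @ V @ iu)"
    using reduced_replace_middle[OF x v(1) hV(1) V(1) hV(2,3)] .
  then have "u \<otimes>\<^bsub>F2\<^esub> V \<otimes>\<^bsub>F2\<^esub> iu = u @ V @ iu"
    using uc iuc F2.m_assoc[of u V iu] V(1) by (simp add: F2_simps mult_concat reduced_append)
  with \<open>(u @ v @ iu) [^]\<^bsub>F2\<^esub> Suc m = _\<close> V(2) show ?thesis by (simp add: V_def)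
qed

lemma F2_torsion_free: "torsion_free F2"
proof (rule F2.torsion_freeI, rule ccontr)
  fix x and n :: nat
  assume x: "x \<in> carrier F2" and n: "0 < n" and e: "x [^]\<^bsub>F2\<^esub> n = \<one>\<^bsub>F2\<^esub>"
    and nontriv: "x \<noteq> \<one>\<^bsub>F2\<^esub>"
  then have "reduced_word x" "x \<noteq> []" by (auto simp: F2_simps)
  then obtain u v where v: "v \<noteq> []" "hd v \<noteq> inv_letter (last v)"
    and xe: "x = u @ v @ rev (map inv_letter u)" using cyclic_decomposition by blast
  obtain m where m: "n = Suc m" using n by (cases n) auto
  have "x [^]\<^bsub>F2\<^esub> n = u @ concat (replicate (Suc m) v) @ rev (map inv_letter u)"
    using conjugate_cyclically_reduced_power[of u v m] \<open>reduced_word x\<close> v m xe by simp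
  then show False using e v(1) by (simp add: F2_simps)
qed

section \<open>Integer linear algebra\<close>

text \<open>A homogeneous integer linear system with more unknowns than equations has a nontrivial
  integer solution (induction on the equations, eliminating one unknown by cross-multiplication).\<close>
lemma int_homogeneous_system_nontrivial_solution:
  fixes M :: "'a \<Rightarrow> 'b \<Rightarrow> int"
  assumes "finite J" "finite I" "card I > card J"
  shows "\<exists>c. (\<exists>s\<in>I. c s \<noteq> 0) \<and> (\<forall>j\<in>J. (\<Sum>s\<in>I. c s * M s j) = 0)"
  using assms
proof (induction J arbitrary: I M rule: finite_induct)
  case empty
  then obtain s where "s \<in> I" by fastforce
  then show ?case by (intro exI[of _ "\<lambda>_. 1"]) auto
next
  case (insert j J)
  show ?case
  proof (cases "\<forall>s\<in>I. M s j = 0")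
    case True
    have "card I > card J" using insert by simp
    from insert.IH[OF insert.prems(1) this] obtain c where
      c: "\<exists>s\<in>I. c s \<noteq> 0" "\<forall>j\<in>J. (\<Sum>s\<in>I. c s * M s j) = 0" by blast
    then show ?thesis using True by (intro exI[of _ c]) auto
  next
    case False
    then obtain s0 where s0: "s0 \<in> I" "M s0 j \<noteq> 0" by blast
    define a where "a = M s0 j"
    define I' where "I' = I - {s0}"
    have fI': "finite I'" using insert.prems I'_def by simp
    have cI': "card I' > card J" using insert s0 I'_def by (simp add: card_Diff_singleton)
    define M' where "M' = (\<lambda>s k. a * M s k - M s j * M s0 k)"
    from insert.IH[OF fI' cI', of M'] obtain c' where
      c': "\<exists>s\<in>I'. c' s \<noteq> 0" "\<forall>k\<in>J. (\<Sum>s\<in>I'. c' s * M' s k) = 0" by blast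
    define c where "c = (\<lambda>s. if s = s0 then - (\<Sum>t\<in>I'. c' t * M t j) else a * c' s)"
    have split: "(\<Sum>s\<in>I. f s) = f s0 + (\<Sum>s\<in>I'. f s)" for f :: "'a \<Rightarrow> int"
      using s0 insert.prems(1) I'_def by (simp add: sum.remove)
    have cI'eq: "(\<Sum>s\<in>I'. c s * f s) = (\<Sum>s\<in>I'. a * c' s * f s)" for f :: "'a \<Rightarrow> int"
      using I'_def by (intro sum.cong) (auto simp: c_def)
    have "\<forall>k\<in>insert j J. (\<Sum>s\<in>I. c s * M s k) = 0"
    proof
      fix k assume k: "k \<in> insert j J"
      have "(\<Sum>s\<in>I. c s * M s k) = - (\<Sum>t\<in>I'. c' t * M t j) * M s0 k + (\<Sum>s\<in>I'. a * c' s * M s k)"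
        by (simp only: split[of "\<lambda>s. c s * M s k"] cI'eq) (simp add: c_def)
      also have "\<dots> = (\<Sum>s\<in>I'. c' s * (a * M s k - M s j * M s0 k))"
        by (simp add: sum_distrib_right sum_subtractf algebra_simps sum_distrib_left)
      also have "\<dots> = 0"
      proof (cases "k = j")
        case True then show ?thesis by (simp add: a_def algebra_simps)
      next
        case False then have "k \<in> J" using k by simp
        then show ?thesis using c'(2) by (simp add: M'_def)
      qed
      finally show "(\<Sum>s\<in>I. c s * M s k) = 0" .
    qed
    moreover obtain s where "s \<in> I'" "c' s \<noteq> 0" using c'(1) by blast
    then have "c s \<noteq> 0" using s0 a_def by (auto simp: c_def I'_def)
    then have "\<exists>s\<in>I. c s \<noteq> 0" using \<open>s \<in> I'\<close> I'_def by blast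
    ultimately show ?thesis by blast
  qed
qed

section \<open>Independent families in finitely generated abelian groups\<close>

definition infinite_order :: "('a, 'b) monoid_scheme \<Rightarrow> 'a \<Rightarrow> bool" where
  "infinite_order G x \<longleftrightarrow> (\<forall>n::int. x [^]\<^bsub>G\<^esub> n = \<one>\<^bsub>G\<^esub> \<longrightarrow> n = 0)"

context comm_group
begin

definition lincomb :: "('a \<Rightarrow> int) \<Rightarrow> 'a set \<Rightarrow> 'a" where
  "lincomb c S = finprod G (\<lambda>s. s [^] c s) S"

lemma lincomb_closed[simp]: "S \<subseteq> carrier G \<Longrightarrow> lincomb c S \<in> carrier G"
  unfolding lincomb_def by (rule finprod_closed) auto

lemma lincomb_mult: "S \<subseteq> carrier G \<Longrightarrow> lincomb c S \<otimes> lincomb d S = lincomb (\<lambda>s. c s + d s) S"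
  unfolding lincomb_def by (subst finprod_multf[symmetric]) (auto intro!: finprod_cong' simp: int_pow_mult)

lemma lincomb_zero: "lincomb (\<lambda>s. 0) S = \<one>"
  unfolding lincomb_def by simp

lemma lincomb_cong: "S \<subseteq> carrier G \<Longrightarrow> (\<And>s. s \<in> S \<Longrightarrow> c s = d s) \<Longrightarrow> lincomb c S = lincomb d S"
  unfolding lincomb_def by (rule finprod_cong') auto

lemma lincomb_insert: "finite S \<Longrightarrow> S \<subseteq> carrier G \<Longrightarrow> a \<in> carrier G \<Longrightarrow> a \<notin> S \<Longrightarrow>
   lincomb c (insert a S) = a [^] c a \<otimes> lincomb c S"
  unfolding lincomb_def by (subst finprod_insert) auto

lemma lincomb_pow: "finite S \<Longrightarrow> S \<subseteq> carrier G \<Longrightarrow> (lincomb c S) [^] (k::int) = lincomb (\<lambda>s. k * c s) S"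
proof (induction S rule: finite_induct)
  case empty then show ?case by (simp add: lincomb_def)
next
  case (insert a S)
  then have "(lincomb c (insert a S)) [^] k = (a [^] c a) [^] k \<otimes> (lincomb c S) [^] k"
    by (simp add: lincomb_insert int_pow_distrib)
  also have "\<dots> = a [^] (k * c a) \<otimes> lincomb (\<lambda>s. k * c s) S"
    using insert by (simp add: int_pow_pow mult.commute)
  finally show ?case using insert by (simp add: lincomb_insert)
qed

lemma lincomb_inv: "S \<subseteq> carrier G \<Longrightarrow> inv (lincomb c S) = lincomb (\<lambda>s. - c s) S"
proof -
  assume S: "S \<subseteq> carrier G"
  have "lincomb (\<lambda>s. - c s) S \<otimes> lincomb c S = \<one>" using S by (simp add: lincomb_mult lincomb_zero)
  then show ?thesis using S by (simp add: inv_equality)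
qed

lemma indep_zero:
  assumes "Z_independent G S" "S \<subseteq> carrier G" "lincomb c S = \<one>" "s \<in> S"
  shows "c s = 0"
proof -
  have "finprod G (\<lambda>s. s [^] c s) S = \<one> \<longrightarrow> (\<forall>s\<in>S. c s = 0)"
    using assms(1) unfolding Z_independent_def by (rule spec)
  then show ?thesis using assms(3,4) unfolding lincomb_def by blast
qed

lemma indep_eq:
  assumes "Z_independent G S" "S \<subseteq> carrier G" "lincomb c S = lincomb d S" "s \<in> S"
  shows "c s = d s"
proof -
  have 1: "lincomb (\<lambda>s. c s + - d s) S = lincomb c S \<otimes> lincomb (\<lambda>s. - d s) S"
    by (rule lincomb_mult[symmetric, OF assms(2)])
  have 2: "lincomb (\<lambda>s. - d s) S = inv (lincomb d S)" by (rule lincomb_inv[symmetric, OF assms(2)])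
  have "lincomb c S \<otimes> inv (lincomb d S) = \<one>" using assms(2,3) by (metis lincomb_closed r_inv)
  then have "lincomb (\<lambda>s. c s + - d s) S = \<one>" using 1 2 by simp
  then have "c s + - d s = 0" using indep_zero[OF assms(1,2) _ assms(4)] by blast
  then show ?thesis by simp
qed

lemma lincomb_indicator: "finite S \<Longrightarrow> S \<subseteq> carrier G \<Longrightarrow> a \<in> S \<Longrightarrow> lincomb (\<lambda>s. if s = a then 1 else 0) S = a"
proof -
  assume a: "finite S" "S \<subseteq> carrier G" "a \<in> S"
  have "lincomb (\<lambda>s. if s = a then 1 else 0) S = finprod G (\<lambda>s. if a = s then s else \<one>) S"
    unfolding lincomb_def
  proof (rule finprod_cong')
    show "(\<lambda>s. if a = s then s else \<one>) \<in> S \<rightarrow> carrier G" using a by auto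
    fix s assume "s \<in> S"
    then show "s [^] (if s = a then 1 else 0 :: int) = (if a = s then s else \<one>)"
      using a by (cases "s = a") auto
  qed simp
  also have "\<dots> = a" using a by (intro finprod_singleton) auto
  finally show ?thesis .
qed

lemma lincomb_sum: "finite S \<Longrightarrow> Gs \<subseteq> carrier G \<Longrightarrow>
  finprod G (\<lambda>s. lincomb (E s) Gs) S = lincomb (\<lambda>j. \<Sum>s\<in>S. E s j) Gs"
proof (induction S rule: finite_induct)
  case empty then show ?case using lincomb_zero by simp
next
  case (insert a S)
  then show ?case by (simp add: lincomb_mult)
qed

lemma generate_lincomb:
  assumes Gs: "finite Gs" "Gs \<subseteq> carrier G"
  shows "y \<in> generate G Gs \<Longrightarrow> \<exists>M. y = lincomb M Gs"
proof (induction y rule: generate.induct)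
  case one then show ?case using lincomb_zero by metis
next
  case (incl h) then show ?case using lincomb_indicator[OF Gs] by metis
next
  case (inv h)
  then have "inv h = inv (lincomb (\<lambda>s. if s = h then 1 else 0) Gs)" using lincomb_indicator[OF Gs] by metis
  then show ?case using Gs lincomb_inv by metis
next
  case (eng h1 h2)
  then obtain M1 M2 where "h1 = lincomb M1 Gs" "h2 = lincomb M2 Gs" by blast
  then show ?case using Gs lincomb_mult by metis
qed

lemma indep_card_le:
  assumes Gs: "finite Gs" "Gs \<subseteq> carrier G" "generate G Gs = carrier G"
    and S: "finite S" "S \<subseteq> carrier G" "Z_independent G S"
  shows "card S \<le> card Gs"
proof (rule ccontr)
  assume "\<not> card S \<le> card Gs"
  then have lt: "card S > card Gs" by simp
  have "\<forall>s\<in>S. \<exists>M. s = lincomb M Gs" using generate_lincomb Gs S by blast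
  then obtain M where M: "\<forall>s\<in>S. s = lincomb (M s) Gs" by metis
  from int_homogeneous_system_nontrivial_solution[OF Gs(1) S(1) lt, of M] obtain c where
    c: "\<exists>s\<in>S. c s \<noteq> 0" "\<forall>j\<in>Gs. (\<Sum>s\<in>S. c s * M s j) = 0" by blast
  have "lincomb c S = finprod G (\<lambda>s. lincomb (\<lambda>j. c s * M s j) Gs) S"
    unfolding lincomb_def
  proof (rule finprod_cong')
    show "s [^] c s = finprod G (\<lambda>j. j [^] (c s * M s j)) Gs" if "s \<in> S" for s
    proof -
      have e: "s = lincomb (M s) Gs" using M that by blast
      have "(lincomb (M s) Gs) [^] c s = s [^] c s" by (simp only: e[symmetric])
      moreover have "(lincomb (M s) Gs) [^] c s = lincomb (\<lambda>j. c s * M s j) Gs" using Gs by (simp add: lincomb_pow)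
      ultimately show ?thesis by (simp add: lincomb_def)
    qed
  qed (use Gs in \<open>auto intro!: finprod_closed\<close>)
  also have "\<dots> = lincomb (\<lambda>j. \<Sum>s\<in>S. c s * M s j) Gs" using S Gs by (simp add: lincomb_sum)
  also have "\<dots> = lincomb (\<lambda>j. 0) Gs" using c(2) Gs by (intro lincomb_cong) auto
  also have "\<dots> = \<one>" by (simp add: lincomb_zero)
  finally show False using c(1) indep_zero S by blast
qed

lemma indep_iff_lincomb:
  "Z_independent G S \<longleftrightarrow> (\<forall>c. lincomb c S = \<one> \<longrightarrow> (\<forall>s\<in>S. c s = 0))"
  by (simp add: Z_independent_def lincomb_def)

lemma singleton_indep_iff: "x \<in> carrier G \<Longrightarrow> Z_independent G {x} \<longleftrightarrow> infinite_order G x"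
proof -
  assume "x \<in> carrier G"
  then have "Z_independent G {x} \<longleftrightarrow> (\<forall>c::'a \<Rightarrow> int. x [^] c x = \<one> \<longrightarrow> c x = 0)"
    by (simp add: Z_independent_def)
  also have "\<dots> \<longleftrightarrow> infinite_order G x"
    unfolding infinite_order_def
  proof (intro iffI allI impI)
    fix n :: int assume "\<forall>c::'a \<Rightarrow> int. x [^] c x = \<one> \<longrightarrow> c x = 0" "x [^] n = \<one>"
    then show "n = 0" by (auto dest: spec[of _ "\<lambda>_. n"])
  qed simp
  finally show ?thesis .
qed

lemma one_notin_indep:
  assumes "Z_independent G S" "finite S" "S \<subseteq> carrier G"
  shows "\<one> \<notin> S"
proof
  assume one: "\<one> \<in> S"
  have "lincomb (\<lambda>s. if s = \<one> then 1 else 0) S = \<one>" using lincomb_indicator[OF assms(2,3) one] .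
  then have "(if \<one> = \<one> then 1 else 0 :: int) = 0" using indep_zero[OF assms(1,3) _ one] by blast
  then show False by simp
qed

text \<open>In a finitely generated abelian group the sizes of independent families are bounded, so the
  torsion-free rank is a maximum: it is attained and bounds every independent family.\<close>
lemma indep_cards_finite:
  assumes "finitely_generated G"
  shows "finite (card ` {S. finite S \<and> S \<subseteq> carrier G \<and> Z_independent G S})"
proof -
  obtain Gs where "finite Gs" "Gs \<subseteq> carrier G" "generate G Gs = carrier G"
    using assms unfolding finitely_generated_def by blast
  then have "card ` {S. finite S \<and> S \<subseteq> carrier G \<and> Z_independent G S} \<subseteq> {..card Gs}"
    using indep_card_le by fastforce
  then show ?thesis using finite_subset by blast
qed

lemma rank_ge:
  assumes "finitely_generated G" "finite S" "S \<subseteq> carrier G" "Z_independent G S"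
  shows "card S \<le> torsion_free_rank G"
  unfolding torsion_free_rank_def
  by (rule cSup_upper) (use assms indep_cards_finite in \<open>auto intro: bdd_above_finite\<close>)

lemma rank_attained:
  assumes "finitely_generated G"
  shows "\<exists>S. finite S \<and> S \<subseteq> carrier G \<and> Z_independent G S \<and> card S = torsion_free_rank G"
proof -
  let ?X = "card ` {S. finite S \<and> S \<subseteq> carrier G \<and> Z_independent G S}"
  have fin: "finite ?X" using indep_cards_finite assms .
  have ne: "?X \<noteq> {}" using Z_independent_def by fastforce
  have "torsion_free_rank G = Max ?X"
    unfolding torsion_free_rank_def using cSup_eq_Max[OF fin ne] .
  then show ?thesis using Max_in[OF fin ne] by auto
qed

end

section \<open>Detecting elements of infinite order by homomorphisms to the integers\<close>

context comm_group
begin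

lemma power_in_span_of_dependent_insert:
  assumes S: "finite S" "S \<subseteq> carrier G" "Z_independent G S"
    and a: "a \<in> carrier G" "a \<notin> S" and dep: "\<not> Z_independent G (insert a S)"
  shows "\<exists>n c. n \<noteq> 0 \<and> a [^] (n::int) = lincomb c S"
proof -
  obtain c where c: "lincomb c (insert a S) = \<one>" "\<exists>s\<in>insert a S. c s \<noteq> 0"
    using dep unfolding indep_iff_lincomb by blast
  have e: "a [^] c a \<otimes> lincomb c S = \<one>" using c(1) lincomb_insert[OF S(1,2) a] by simp
  have "c a \<noteq> 0"
  proof
    assume "c a = 0"
    then have "lincomb c S = \<one>" using e S a by simp
    then have "\<forall>s\<in>S. c s = 0" using indep_zero[OF S(3,2), of c] by simp
    then show False using c(2) \<open>c a = 0\<close> by blast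
  qed
  moreover have "inv (lincomb c S) = a [^] c a" using e S a by (intro inv_equality) auto
  then have "a [^] c a = lincomb (\<lambda>s. - c s) S" using lincomb_inv[OF S(2)] by simp
  ultimately show ?thesis by blast
qed

text \<open>An element of infinite order lies in an independent family S over which every element has
  a nonzero power in the span: take such a family of maximal size.\<close>
lemma maximal_independent_extension:
  assumes fg: "finitely_generated G" and x: "x \<in> carrier G" "infinite_order G x"
  shows "\<exists>S. finite S \<and> S \<subseteq> carrier G \<and> x \<in> S \<and> Z_independent G S \<and>
           (\<forall>a\<in>carrier G. \<exists>n c. n \<noteq> 0 \<and> a [^] (n::int) = lincomb c S)"
proof -
  obtain Gs where Gs: "finite Gs" "Gs \<subseteq> carrier G" "generate G Gs = carrier G"
    using fg unfolding finitely_generated_def by blast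
  define F where "F = {S. finite S \<and> S \<subseteq> carrier G \<and> x \<in> S \<and> Z_independent G S}"
  have xF: "{x} \<in> F" using x singleton_indep_iff by (simp add: F_def)
  have bd: "\<forall>y. (\<exists>S\<in>F. card S = y) \<longrightarrow> y \<le> card Gs"
    using indep_card_le[OF Gs] by (auto simp: F_def)
  obtain k where k: "\<exists>S\<in>F. card S = k" "\<forall>y. (\<exists>S\<in>F. card S = y) \<longrightarrow> y \<le> k"
    using Nat.ex_has_greatest_nat[of "\<lambda>k. \<exists>S\<in>F. card S = k" 1 "card Gs"] xF bd by force
  then obtain S where S: "finite S" "S \<subseteq> carrier G" "x \<in> S" "Z_independent G S" "card S = k"
    by (auto simp: F_def)
  have "\<exists>n c. n \<noteq> 0 \<and> a [^] (n::int) = lincomb c S" if a: "a \<in> carrier G" for a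
  proof (cases "a \<in> S")
    case True
    then show ?thesis using lincomb_indicator[OF S(1,2) True] a
      by (intro exI[of _ 1] exI[of _ "\<lambda>s. if s = a then 1 else 0"]) auto
  next
    case False
    have "card (insert a S) = k + 1" using False S by simp
    then have "insert a S \<notin> F" using k(2) by (metis Suc_eq_plus1 not_less_eq_eq order_refl)
    then have "\<not> Z_independent G (insert a S)" using S a by (simp add: F_def)
    then show ?thesis using power_in_span_of_dependent_insert[OF S(1,2,4) a False] by blast
  qed
  then show ?thesis using S by blast
qed

lemma coordinate_ratio_well_defined:
  assumes S: "finite S" "S \<subseteq> carrier G" "Z_independent G S" "x \<in> S" and a: "a \<in> carrier G"
    and n: "n \<noteq> 0" "a [^] n = lincomb c S" and m: "m \<noteq> 0" "a [^] m = lincomb d S"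
  shows "(of_int (c x) / of_int n :: rat) = of_int (d x) / of_int m"
proof -
  have "a [^] (n * m) = lincomb (\<lambda>s. m * c s) S" "a [^] (m * n) = lincomb (\<lambda>s. n * d s) S"
    using n m a S by (simp_all add: int_pow_pow[symmetric] lincomb_pow)
  then have "lincomb (\<lambda>s. m * c s) S = lincomb (\<lambda>s. n * d s) S" by (simp add: mult.commute)
  then have "m * c x = n * d x" using indep_eq[OF S(3,2) _ S(4)] by blast
  then have "rat_of_int (c x) * of_int m = of_int (d x) * of_int n"
    by (metis mult.commute of_int_mult)
  then show ?thesis using n(1) m(1) by (simp add: field_simps)
qed

text \<open>Over such a family, the x-coordinate of a (divided by the exponent needed to bring a
  into the span) is a well-defined additive rational function taking the value 1 at x.\<close>
lemma rational_coordinate_functional: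
  assumes S: "finite S" "S \<subseteq> carrier G" "Z_independent G S" "x \<in> S"
    and span: "\<forall>a\<in>carrier G. \<exists>n c. n \<noteq> 0 \<and> a [^] (n::int) = lincomb c S"
  shows "\<exists>\<phi>::'a \<Rightarrow> rat. (\<forall>a\<in>carrier G. \<forall>b\<in>carrier G. \<phi> (a \<otimes> b) = \<phi> a + \<phi> b) \<and> \<phi> x = 1"
proof -
  have "\<forall>a\<in>carrier G. \<exists>nc. fst nc \<noteq> 0 \<and> a [^] (fst nc :: int) = lincomb (snd nc) S"
  proof
    fix a assume "a \<in> carrier G"
    with span obtain n c where "n \<noteq> 0" "a [^] (n::int) = lincomb c S" by blast
    then show "\<exists>nc. fst nc \<noteq> 0 \<and> a [^] (fst nc :: int) = lincomb (snd nc) S"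
      by (intro exI[of _ "(n, c)"]) simp
  qed
  from bchoice[OF this] obtain R where
    R: "\<forall>a\<in>carrier G. fst (R a) \<noteq> 0 \<and> a [^] (fst (R a) :: int) = lincomb (snd (R a)) S" by blast
  define N where "N a = fst (R a)" for a
  define C where "C a = snd (R a)" for a
  have NC: "N a \<noteq> 0 \<and> a [^] (N a) = lincomb (C a) S" if "a \<in> carrier G" for a
    using R that unfolding N_def C_def by blast
  define \<phi> where "\<phi> a = (of_int (C a x) / of_int (N a) :: rat)" for a
  have \<phi>_eq: "\<phi> a = of_int (c x) / of_int n"
    if a: "a \<in> carrier G" and h: "n \<noteq> 0" "a [^] n = lincomb c S" for a n c
    unfolding \<phi>_def using coordinate_ratio_well_defined[OF S a] NC[OF a] h by blast
  have "\<phi> (a \<otimes> b) = \<phi> a + \<phi> b" if a: "a \<in> carrier G" and b: "b \<in> carrier G" for a b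
  proof -
    let ?n = "N a" and ?m = "N b"
    have "(a \<otimes> b) [^] (?n * ?m) = a [^] (?n * ?m) \<otimes> b [^] (?m * ?n)"
      using a b by (simp add: int_pow_distrib mult.commute)
    also have "\<dots> = (a [^] ?n) [^] ?m \<otimes> (b [^] ?m) [^] ?n"
      using a b by (simp add: int_pow_pow)
    also have "\<dots> = lincomb (\<lambda>s. ?m * C a s + ?n * C b s) S"
      using NC[OF a] NC[OF b] S by (simp add: lincomb_pow lincomb_mult)
    finally have "\<phi> (a \<otimes> b) = of_int (?m * C a x + ?n * C b x) / of_int (?n * ?m)"
      using a b NC[OF a] NC[OF b] by (intro \<phi>_eq) auto
    then show ?thesis using NC[OF a] NC[OF b] unfolding \<phi>_def by (simp add: field_simps)
  qed
  moreover have "\<phi> x = 1"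
  proof -
    have x: "x \<in> carrier G" using S by blast
    have "x [^] (1::int) = lincomb (\<lambda>s. if s = x then 1 else 0) S"
      using lincomb_indicator[OF S(1,2,4)] x by simp
    from \<phi>_eq[OF x one_neq_zero this] show ?thesis by simp
  qed
  ultimately show ?thesis by blast
qed

text \<open>An additive rational function on a finitely generated group becomes integer valued after
  multiplication by a common denominator of its values on the generators.\<close>
lemma additive_rational_common_denominator:
  fixes \<phi> :: "'a \<Rightarrow> rat"
  assumes fg: "finitely_generated G"
    and add: "\<forall>a\<in>carrier G. \<forall>b\<in>carrier G. \<phi> (a \<otimes> b) = \<phi> a + \<phi> b"
  shows "\<exists>D::int. D \<noteq> 0 \<and> (\<forall>a\<in>carrier G. of_int D * \<phi> a \<in> \<int>)"
proof -
  obtain Gs where Gs: "finite Gs" "Gs \<subseteq> carrier G" "generate G Gs = carrier G"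
    using fg unfolding finitely_generated_def by blast
  define den where "den g = snd (quotient_of (\<phi> g))" for g
  define D where "D = prod den Gs"
  have den: "den g > 0" "of_int (den g) * \<phi> g \<in> \<int>" for g
  proof -
    obtain p q where pq: "quotient_of (\<phi> g) = (p, q)" by fastforce
    then have "q > 0" "\<phi> g = of_int p / of_int q"
      using quotient_of_denom_pos quotient_of_div by blast+
    moreover have "den g = q" by (simp add: den_def pq)
    ultimately show "den g > 0" "of_int (den g) * \<phi> g \<in> \<int>" by simp_all
  qed
  have \<phi>1: "\<phi> \<one> = 0" using add[rule_format, OF one_closed one_closed] by simp
  have \<phi>inv: "\<phi> (inv a) = - \<phi> a" if "a \<in> carrier G" for a
  proof -
    have "\<phi> a + \<phi> (inv a) = 0" using add[rule_format, OF that inv_closed[OF that]] \<phi>1 that by simp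
    then show ?thesis by (simp add: add_eq_0_iff)
  qed
  have DGs: "of_int D * \<phi> g \<in> \<int>" if g: "g \<in> Gs" for g
  proof -
    have "D = prod den (Gs - {g}) * den g" unfolding D_def using g Gs by (simp add: prod.remove)
    then have eq: "of_int D * \<phi> g = of_int (prod den (Gs - {g})) * (of_int (den g) * \<phi> g)"
      by (simp only: of_int_mult mult.assoc)
    have "of_int (prod den (Gs - {g})) * (of_int (den g) * \<phi> g) \<in> \<int>"
      by (intro Ints_mult Ints_of_int den(2))
    then show ?thesis by (simp only: eq)
  qed
  have "of_int D * \<phi> a \<in> \<int>" if "a \<in> generate G Gs" for a
    using that
  proof (induction a rule: generate.induct)
    case (inv h)
    then show ?case using \<phi>inv DGs Gs by auto
  next
    case (eng h1 h2)
    then have "h1 \<in> carrier G" "h2 \<in> carrier G" using Gs generate_in_carrier by blast+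
    then show ?case using eng add by (simp add: distrib_left)
  qed (use \<phi>1 DGs in auto)
  moreover have "D \<noteq> 0" unfolding D_def using Gs(1) den(1) by (metis less_irrefl prod_zero_iff)
  ultimately show ?thesis using Gs(3) by blast
qed

lemma infinite_order_detected:
  assumes fg: "finitely_generated G" and x: "x \<in> carrier G" "infinite_order G x"
  shows "\<exists>\<psi>::'a \<Rightarrow> int. (\<forall>a\<in>carrier G. \<forall>b\<in>carrier G. \<psi> (a \<otimes> b) = \<psi> a + \<psi> b) \<and> \<psi> x \<noteq> 0"
proof -
  obtain S where S: "finite S" "S \<subseteq> carrier G" "x \<in> S" "Z_independent G S"
    "\<forall>a\<in>carrier G. \<exists>n c. n \<noteq> 0 \<and> a [^] (n::int) = lincomb c S"
    using maximal_independent_extension[OF assms] by blast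
  obtain \<phi> :: "'a \<Rightarrow> rat" where
    \<phi>: "\<forall>a\<in>carrier G. \<forall>b\<in>carrier G. \<phi> (a \<otimes> b) = \<phi> a + \<phi> b" "\<phi> x = 1"
    using rational_coordinate_functional[OF S(1,2,4,3,5)] by blast
  obtain D :: int where D: "D \<noteq> 0" "\<forall>a\<in>carrier G. of_int D * \<phi> a \<in> \<int>"
    using additive_rational_common_denominator[OF fg \<phi>(1)] by blast
  define \<psi> where "\<psi> a = \<lfloor>of_int D * \<phi> a\<rfloor>" for a
  have \<psi>_of: "of_int (\<psi> a) = of_int D * \<phi> a" if "a \<in> carrier G" for a
  proof -
    have "of_int D * \<phi> a \<in> \<int>" using D(2) that by blast
    then obtain k where k: "of_int D * \<phi> a = of_int k" by (rule Ints_cases)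
    show ?thesis unfolding \<psi>_def k by simp
  qed
  have "\<psi> (a \<otimes> b) = \<psi> a + \<psi> b" if "a \<in> carrier G" "b \<in> carrier G" for a b
  proof -
    have "rat_of_int (\<psi> (a \<otimes> b)) = rat_of_int (\<psi> a + \<psi> b)"
      using that \<psi>_of \<phi>(1) by (simp add: distrib_left)
    then show ?thesis by (metis of_int_eq_iff)
  qed
  moreover have "\<psi> x \<noteq> 0" using \<psi>_of[OF x(1)] \<phi>(2) D(1) by simp
  ultimately show ?thesis by blast
qed

end

section \<open>Torsion-free rank under an epimorphism of abelian groups\<close>

locale epi_ab = A: comm_group A + B: comm_group B for A (structure) and B (structure) +
  fixes p
  assumes hom: "p \<in> hom A B" and surj: "p ` carrier A = carrier B"
    and fgA: "finitely_generated A" and fgB: "finitely_generated B"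
begin

sublocale h: group_hom A B p
  by (unfold_locales) (rule hom)

lemma hom_lincomb: "finite S \<Longrightarrow> S \<subseteq> carrier A \<Longrightarrow>
   p (A.lincomb c S) = finprod B (\<lambda>s. p s [^]\<^bsub>B\<^esub> c s) S"
proof (induction S rule: finite_induct)
  case empty then show ?case by (simp add: A.lincomb_def)
next
  case (insert a S)
  then have a: "a \<in> carrier A" and S: "S \<subseteq> carrier A" by auto
  have "p (A.lincomb c (insert a S)) = p (a [^]\<^bsub>A\<^esub> c a) \<otimes>\<^bsub>B\<^esub> p (A.lincomb c S)"
    using insert a S by (simp add: A.lincomb_insert)
  also have "\<dots> = p a [^]\<^bsub>B\<^esub> c a \<otimes>\<^bsub>B\<^esub> finprod B (\<lambda>s. p s [^]\<^bsub>B\<^esub> c s) S"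
    using insert a S by (simp add: h.hom_int_pow)
  also have "\<dots> = finprod B (\<lambda>s. p s [^]\<^bsub>B\<^esub> c s) (insert a S)"
    using insert a S by (subst B.finprod_insert) (auto simp: Pi_def)
  finally show ?case .
qed

lemma hom_lincomb_reindex:
  assumes inj: "inj_on p S" and S: "finite S" "S \<subseteq> carrier A"
  shows "p (A.lincomb c S) = B.lincomb (\<lambda>t. c (inv_into S p t)) (p ` S)"
proof -
  have "B.lincomb (\<lambda>t. c (inv_into S p t)) (p ` S) = finprod B (\<lambda>s. p s [^]\<^bsub>B\<^esub> c (inv_into S p (p s))) S"
    unfolding B.lincomb_def using S inj by (subst B.finprod_reindex) (auto simp: Pi_def)
  also have "\<dots> = finprod B (\<lambda>s. p s [^]\<^bsub>B\<^esub> c s) S"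
    using S inj by (intro B.finprod_cong') (auto simp: Pi_def)
  finally show ?thesis using hom_lincomb[OF S] by simp
qed

lemma kernel_free_if_image_independent:
  assumes S: "finite S" "S \<subseteq> carrier A" "inj_on p S" "Z_independent B (p ` S)"
    and c: "p (A.lincomb c S) = \<one>\<^bsub>B\<^esub>"
  shows "\<forall>s\<in>S. c s = 0"
proof -
  have pS: "p ` S \<subseteq> carrier B" using S(2) by auto
  have "B.lincomb (\<lambda>t. c (inv_into S p t)) (p ` S) = p (A.lincomb c S)"
    using hom_lincomb_reindex[OF S(3,1,2)] by (rule sym)
  then have "B.lincomb (\<lambda>t. c (inv_into S p t)) (p ` S) = \<one>\<^bsub>B\<^esub>" using c by (rule trans)
  then have "c (inv_into S p (p s)) = 0" if "s \<in> S" for s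
    using B.indep_zero[OF S(4) pS] that by blast
  then show ?thesis using inv_into_f_f[OF S(3)] by simp
qed

lemma finite_family_lifts:
  assumes "finite T" "T \<subseteq> carrier B"
  shows "\<exists>S. finite S \<and> S \<subseteq> carrier A \<and> inj_on p S \<and> p ` S = T"
proof -
  have "\<forall>t\<in>T. \<exists>a. a \<in> carrier A \<and> p a = t"
  proof
    fix t assume "t \<in> T"
    then have "t \<in> p ` carrier A" using assms(2) surj by auto
    then show "\<exists>a. a \<in> carrier A \<and> p a = t" by (auto simp: image_iff)
  qed
  from bchoice[OF this] obtain \<sigma> where \<sigma>: "\<forall>t\<in>T. \<sigma> t \<in> carrier A \<and> p (\<sigma> t) = t" ..
  have "p ` \<sigma> ` T = T" using \<sigma> by force
  moreover have "inj_on p (\<sigma> ` T)" using \<sigma> by (intro inj_onI) auto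
  ultimately show ?thesis using \<sigma> assms(1) by (intro exI[of _ "\<sigma> ` T"]) auto
qed

lemma lifted_family_independent:
  assumes T: "finite T" "T \<subseteq> carrier B" "Z_independent B T"
    and S: "finite S" "S \<subseteq> carrier A" "inj_on p S" "p ` S = T"
    and y: "y \<in> carrier A" "p y = \<one>\<^bsub>B\<^esub>" "infinite_order A y"
  shows "y \<notin> S" "Z_independent A (insert y S)"
proof -
  have "\<one>\<^bsub>B\<^esub> \<notin> T" using B.one_notin_indep[OF T(3,1,2)] .
  then show yS: "y \<notin> S" using y(2) S(4) by (metis imageI)
  show "Z_independent A (insert y S)"
    unfolding A.indep_iff_lincomb
  proof (intro allI impI)
    fix c assume "A.lincomb c (insert y S) = \<one>\<^bsub>A\<^esub>"
    then have e: "y [^]\<^bsub>A\<^esub> c y \<otimes>\<^bsub>A\<^esub> A.lincomb c S = \<one>\<^bsub>A\<^esub>"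
      using A.lincomb_insert[OF S(1,2) y(1) yS] by simp
    then have "p (y [^]\<^bsub>A\<^esub> c y \<otimes>\<^bsub>A\<^esub> A.lincomb c S) = \<one>\<^bsub>B\<^esub>" by simp
    then have "p (y [^]\<^bsub>A\<^esub> c y) \<otimes>\<^bsub>B\<^esub> p (A.lincomb c S) = \<one>\<^bsub>B\<^esub>"
      using y(1) S(2) by (simp add: h.hom_mult)
    then have "p (A.lincomb c S) = \<one>\<^bsub>B\<^esub>" using y S(2) by (simp add: h.hom_int_pow)
    then have zero: "\<forall>s\<in>S. c s = 0"
      using kernel_free_if_image_independent[OF S(1-3)] S(4) T(3) by blast
    then have "A.lincomb c S = \<one>\<^bsub>A\<^esub>"
      using A.lincomb_cong[OF S(2), of c "\<lambda>_. 0"] A.lincomb_zero by simp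
    then have "y [^]\<^bsub>A\<^esub> c y = \<one>\<^bsub>A\<^esub>" using e y by simp
    then have "c y = 0" using y(3) unfolding infinite_order_def by blast
    then show "\<forall>s\<in>insert y S. c s = 0" using zero by simp
  qed
qed

lemma rank_le: "torsion_free_rank B \<le> torsion_free_rank A"
proof -
  obtain T where T: "finite T" "T \<subseteq> carrier B" "Z_independent B T" "card T = torsion_free_rank B"
    using B.rank_attained[OF fgB] by blast
  obtain S where S: "finite S" "S \<subseteq> carrier A" "inj_on p S" "p ` S = T"
    using finite_family_lifts[OF T(1,2)] by blast
  have "Z_independent A S"
    unfolding A.indep_iff_lincomb using kernel_free_if_image_independent[OF S(1-3)] S(4) T(3) by simp
  moreover have "card S = card T" using card_image[OF S(3)] S(4) by simp
  ultimately show ?thesis using A.rank_ge[OF fgA S(1,2)] T(4) by simp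
qed

lemma rank_less_if_kernel_infinite_order:
  assumes y: "y \<in> carrier A" "p y = \<one>\<^bsub>B\<^esub>" "infinite_order A y"
  shows "torsion_free_rank B < torsion_free_rank A"
proof -
  obtain T where T: "finite T" "T \<subseteq> carrier B" "Z_independent B T" "card T = torsion_free_rank B"
    using B.rank_attained[OF fgB] by blast
  obtain S where S: "finite S" "S \<subseteq> carrier A" "inj_on p S" "p ` S = T"
    using finite_family_lifts[OF T(1,2)] by blast
  note yS = lifted_family_independent[OF T(1-3) S y]
  have "card (insert y S) \<le> torsion_free_rank A"
    using A.rank_ge[OF fgA, of "insert y S"] yS(2) S(1,2) y(1) by simp
  moreover have "card (insert y S) = Suc (card T)"
    using yS(1) S(1) card_image[OF S(3)] S(4) by simp
  ultimately show ?thesis using T(4) by simp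
qed

text \<open>Conversely, if the kernel is torsion then p is injective on an independent family and
  maps it onto an independent family.\<close>
lemma rank_ge_if_kernel_torsion:
  assumes tor: "\<forall>y\<in>carrier A. p y = \<one>\<^bsub>B\<^esub> \<longrightarrow> \<not> infinite_order A y"
  shows "torsion_free_rank A \<le> torsion_free_rank B"
proof -
  obtain S where S: "finite S" "S \<subseteq> carrier A" "Z_independent A S" "card S = torsion_free_rank A"
    using A.rank_attained[OF fgA] by blast
  have key: "\<forall>s\<in>S. e s = e' s" if h1: "p (A.lincomb e S) = p (A.lincomb e' S)" for e e'
  proof -
    let ?y = "A.lincomb (\<lambda>s. e s + - e' s) S"
    have yc: "?y \<in> carrier A" using S by simp
    have "?y = A.lincomb e S \<otimes>\<^bsub>A\<^esub> inv\<^bsub>A\<^esub> (A.lincomb e' S)"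
      using A.lincomb_mult[OF S(2), of e "\<lambda>s. - e' s"] A.lincomb_inv[OF S(2), of e'] by simp
    then have "p ?y = \<one>\<^bsub>B\<^esub>" using h1 S(2) by (simp add: h.hom_mult h.hom_inv)
    then obtain n :: int where n: "n \<noteq> 0" "?y [^]\<^bsub>A\<^esub> n = \<one>\<^bsub>A\<^esub>"
      using tor yc unfolding infinite_order_def by blast
    then have "A.lincomb (\<lambda>s. n * (e s + - e' s)) S = \<one>\<^bsub>A\<^esub>" using S by (simp add: A.lincomb_pow)
    then have "\<forall>s\<in>S. n * (e s + - e' s) = 0" using A.indep_zero[OF S(3,2), of "\<lambda>s. n * (e s + - e' s)"] by simp
    then show ?thesis using n(1) by simp
  qed
  have inj: "inj_on p S"
  proof (rule inj_onI)
    fix s1 s2 assume s: "s1 \<in> S" "s2 \<in> S" "p s1 = p s2"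
    have "p (A.lincomb (\<lambda>s. if s = s1 then 1 else 0) S) = p (A.lincomb (\<lambda>s. if s = s2 then 1 else 0) S)"
      using A.lincomb_indicator[OF S(1,2)] s by simp
    then have "(\<lambda>s. if s = s1 then 1 else 0 :: int) s1 = (\<lambda>s. if s = s2 then 1 else 0 :: int) s1"
      using key s(1) by blast
    then show "s1 = s2" by (auto split: if_splits)
  qed
  have "Z_independent B (p ` S)"
    unfolding B.indep_iff_lincomb
  proof (intro allI impI)
    fix c assume c: "B.lincomb c (p ` S) = \<one>\<^bsub>B\<^esub>"
    have "B.lincomb c (p ` S) = B.lincomb (\<lambda>t. c (p (inv_into S p t))) (p ` S)"
      using S inj by (intro B.lincomb_cong) auto
    also have "\<dots> = p (A.lincomb (\<lambda>s. c (p s)) S)" using hom_lincomb_reindex[OF inj S(1,2)] by simp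
    finally have "p (A.lincomb (\<lambda>s. c (p s)) S) = p (A.lincomb (\<lambda>s. 0) S)" using c by (simp add: A.lincomb_zero)
    then have "\<forall>s\<in>S. c (p s) = 0" using key by blast
    then show "\<forall>t\<in>p ` S. c t = 0" by blast
  qed
  moreover have "finite (p ` S)" "p ` S \<subseteq> carrier B" using S by auto
  ultimately have "card (p ` S) \<le> torsion_free_rank B" using B.rank_ge[OF fgB] by blast
  then show ?thesis using card_image[OF inj] S(4) by simp
qed

theorem rank_eq_iff_kernel_torsion:
  "torsion_free_rank A = torsion_free_rank B \<longleftrightarrow>
     (\<forall>y\<in>carrier A. p y = \<one>\<^bsub>B\<^esub> \<longrightarrow> \<not> infinite_order A y)"
proof
  assume "torsion_free_rank A = torsion_free_rank B"
  then show "\<forall>y\<in>carrier A. p y = \<one>\<^bsub>B\<^esub> \<longrightarrow> \<not> infinite_order A y"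
    using rank_less_if_kernel_infinite_order by fastforce
qed (use rank_le rank_ge_if_kernel_torsion in \<open>simp add: antisym\<close>)

end

section \<open>Maps induced on quotients\<close>

lemma induced_val:
  assumes G: "group G" and H: "group H" and K: "K \<lhd> G" and L: "L \<lhd> H"
    and f: "f \<in> hom G H" and KL: "\<forall>k\<in>K. f k \<in> L" and g: "g \<in> carrier G"
  shows "induced_quot G H K L f (K #>\<^bsub>G\<^esub> g) = L #>\<^bsub>H\<^esub> f g"
proof -
  interpret G: group G by (rule G)
  interpret H: group H by (rule H)
  interpret K: normal K G by (rule K)
  interpret L: normal L H by (rule L)
  interpret fh: group_hom G H f by (unfold_locales) (rule f)
  define g' where "g' = (SOME g'. g' \<in> K #>\<^bsub>G\<^esub> g \<and> g' \<in> carrier G)"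
  have "\<exists>g'. g' \<in> K #>\<^bsub>G\<^esub> g \<and> g' \<in> carrier G"
    using G.rcos_self[OF g K.subgroup_axioms] g by blast
  then have g'0: "g' \<in> K #>\<^bsub>G\<^esub> g \<and> g' \<in> carrier G" unfolding g'_def by (rule someI_ex)
  then have g': "g' \<in> K #>\<^bsub>G\<^esub> g" "g' \<in> carrier G" by auto
  have "g' \<otimes>\<^bsub>G\<^esub> inv\<^bsub>G\<^esub> g \<in> K" using K.rcos_module_imp[OF G g g'(1)] .
  then have "f (g' \<otimes>\<^bsub>G\<^esub> inv\<^bsub>G\<^esub> g) \<in> L" using KL by blast
  then have "f g' \<otimes>\<^bsub>H\<^esub> inv\<^bsub>H\<^esub> f g \<in> L" using g g' by simp
  then have "f g' \<in> L #>\<^bsub>H\<^esub> f g" using L.rcos_module_rev[OF H] g g' by simp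
  then have "L #>\<^bsub>H\<^esub> f g = L #>\<^bsub>H\<^esub> f g'"
    using H.repr_independence[OF _ _ L.subgroup_axioms] g by simp
  then show ?thesis unfolding induced_quot_def g'_def[symmetric] by simp
qed

lemma induced_hom:
  assumes G: "group G" and H: "group H" and K: "K \<lhd> G" and L: "L \<lhd> H"
    and f: "f \<in> hom G H" and KL: "\<forall>k\<in>K. f k \<in> L"
  shows "induced_quot G H K L f \<in> hom (G Mod K) (H Mod L)"
proof -
  interpret G: group G by (rule G)
  interpret H: group H by (rule H)
  interpret K: normal K G by (rule K)
  interpret L: normal L H by (rule L)
  interpret fh: group_hom G H f by (unfold_locales) (rule f)
  note iv = induced_val[OF G H K L f KL]
  show ?thesis
  proof (rule homI)
    fix U assume "U \<in> carrier (G Mod K)"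
    then obtain a where a: "a \<in> carrier G" "U = K #>\<^bsub>G\<^esub> a" by (auto simp: carrier_FactGroup)
    then show "induced_quot G H K L f U \<in> carrier (H Mod L)"
      using iv by (auto simp: carrier_FactGroup)
  next
    fix U V assume "U \<in> carrier (G Mod K)" "V \<in> carrier (G Mod K)"
    then obtain a b where a: "a \<in> carrier G" "U = K #>\<^bsub>G\<^esub> a"
      and b: "b \<in> carrier G" "V = K #>\<^bsub>G\<^esub> b" by (auto simp: carrier_FactGroup)
    have "U \<otimes>\<^bsub>G Mod K\<^esub> V = K #>\<^bsub>G\<^esub> (a \<otimes>\<^bsub>G\<^esub> b)" using a b by (simp add: K.rcos_sum)
    then have "induced_quot G H K L f (U \<otimes>\<^bsub>G Mod K\<^esub> V) = L #>\<^bsub>H\<^esub> (f a \<otimes>\<^bsub>H\<^esub> f b)"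
      using iv a b by simp
    also have "\<dots> = induced_quot G H K L f U \<otimes>\<^bsub>H Mod L\<^esub> induced_quot G H K L f V"
      using iv a b by (simp add: L.rcos_sum)
    finally show "induced_quot G H K L f (U \<otimes>\<^bsub>G Mod K\<^esub> V) =
      induced_quot G H K L f U \<otimes>\<^bsub>H Mod L\<^esub> induced_quot G H K L f V" .
  qed
qed

lemma induced_surj:
  assumes G: "group G" and H: "group H" and K: "K \<lhd> G" and L: "L \<lhd> H"
    and f: "f \<in> hom G H" and KL: "\<forall>k\<in>K. f k \<in> L" and fs: "f ` carrier G = carrier H"
  shows "induced_quot G H K L f ` carrier (G Mod K) = carrier (H Mod L)"
proof -
  note iv = induced_val[OF G H K L f KL]
  show ?thesis
  proof
    show "induced_quot G H K L f ` carrier (G Mod K) \<subseteq> carrier (H Mod L)"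
      using induced_hom[OF G H K L f KL] by (auto simp: hom_def)
    show "carrier (H Mod L) \<subseteq> induced_quot G H K L f ` carrier (G Mod K)"
    proof
      fix V assume "V \<in> carrier (H Mod L)"
      then obtain b where b: "b \<in> carrier H" "V = L #>\<^bsub>H\<^esub> b" by (auto simp: carrier_FactGroup)
      then have "b \<in> f ` carrier G" using fs by simp
      then obtain a where a: "a \<in> carrier G" "f a = b" by blast
      then have "V = induced_quot G H K L f (K #>\<^bsub>G\<^esub> a)" using iv b by simp
      moreover have "K #>\<^bsub>G\<^esub> a \<in> carrier (G Mod K)" using a by (auto simp: carrier_FactGroup)
      ultimately show "V \<in> induced_quot G H K L f ` carrier (G Mod K)" by blast
    qed
  qed
qed

lemma induced_iso:
  assumes G: "group G" and H: "group H" and K: "K \<lhd> G" and L: "L \<lhd> H"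
    and f: "f \<in> hom G H" and KL: "\<forall>k\<in>K. f k \<in> L" and fs: "f ` carrier G = carrier H"
  shows "induced_quot G H K L f \<in> iso (G Mod K) (H Mod L) \<longleftrightarrow> (\<forall>g\<in>carrier G. f g \<in> L \<longrightarrow> g \<in> K)"
proof -
  interpret G: group G by (rule G)
  interpret H: group H by (rule H)
  interpret K: normal K G by (rule K)
  interpret L: normal L H by (rule L)
  interpret fh: group_hom G H f by (unfold_locales) (rule f)
  note iv = induced_val[OF G H K L f KL]
  let ?i = "induced_quot G H K L f"
  show ?thesis
  proof
    assume iso: "?i \<in> iso (G Mod K) (H Mod L)"
    then have inj: "inj_on ?i (carrier (G Mod K))" by (auto simp: iso_def bij_betw_def)
    show "\<forall>g\<in>carrier G. f g \<in> L \<longrightarrow> g \<in> K"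
    proof (intro ballI impI)
      fix g assume g: "g \<in> carrier G" and fg: "f g \<in> L"
      have "?i (K #>\<^bsub>G\<^esub> g) = L" using iv g fg L.rcos_const[OF H] by simp
      also have "L = ?i (K #>\<^bsub>G\<^esub> \<one>\<^bsub>G\<^esub>)" using iv L.rcos_const[OF H] by simp
      finally have "K #>\<^bsub>G\<^esub> g = K #>\<^bsub>G\<^esub> \<one>\<^bsub>G\<^esub>"
        using inj g by (auto simp: carrier_FactGroup inj_on_def)
      then have "K #>\<^bsub>G\<^esub> g = K" using K.rcos_const[OF G] K.one_closed by simp
      then show "g \<in> K" using G.rcos_self[OF g K.subgroup_axioms] by simp
    qed
  next
    assume C: "\<forall>g\<in>carrier G. f g \<in> L \<longrightarrow> g \<in> K"
    have "inj_on ?i (carrier (G Mod K))"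
    proof (rule inj_onI)
      fix U V assume "U \<in> carrier (G Mod K)" "V \<in> carrier (G Mod K)" and e: "?i U = ?i V"
      then obtain a b where a: "a \<in> carrier G" "U = K #>\<^bsub>G\<^esub> a"
        and b: "b \<in> carrier G" "V = K #>\<^bsub>G\<^esub> b" by (auto simp: carrier_FactGroup)
      have "L #>\<^bsub>H\<^esub> f a = L #>\<^bsub>H\<^esub> f b" using e iv a b by simp
      then have "f b \<in> L #>\<^bsub>H\<^esub> f a" using H.repr_independenceD[OF L.subgroup_axioms] b by simp
      then have "f b \<otimes>\<^bsub>H\<^esub> inv\<^bsub>H\<^esub> f a \<in> L" using L.rcos_module_imp[OF H] a by simp
      then have "f (b \<otimes>\<^bsub>G\<^esub> inv\<^bsub>G\<^esub> a) \<in> L" using a b by simp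
      then have "b \<otimes>\<^bsub>G\<^esub> inv\<^bsub>G\<^esub> a \<in> K" using C a b by simp
      then have "b \<in> K #>\<^bsub>G\<^esub> a" using K.rcos_module_rev[OF G] a b by simp
      then have "K #>\<^bsub>G\<^esub> a = K #>\<^bsub>G\<^esub> b" using G.repr_independence[OF _ _ K.subgroup_axioms] a by simp
      then show "U = V" using a b by simp
    qed
    then show "?i \<in> iso (G Mod K) (H Mod L)"
      using induced_hom[OF G H K L f KL] induced_surj[OF G H K L f KL fs]
      by (auto simp: iso_def bij_betw_def)
  qed
qed

section \<open>Joint kernels of families of homomorphisms\<close>

definition joint_kernel :: "('a, 'b) monoid_scheme \<Rightarrow> ('c, 'd) monoid_scheme \<Rightarrow> ('a \<Rightarrow> 'c) set \<Rightarrow> 'a set" where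
  "joint_kernel G T \<Phi> = {g \<in> carrier G. \<forall>\<phi>\<in>\<Phi>. \<phi> g = \<one>\<^bsub>T\<^esub>}"

lemma RF_kernel_joint: "RF_kernel G = joint_kernel G F2 (hom G F2)"
  unfolding RF_kernel_def joint_kernel_def kernel_def by auto

lemma RFna_kernel_joint:
  "RFna_kernel G = joint_kernel G F2 {\<phi> \<in> hom G F2. nonabelian_image G \<phi>}"
  unfolding RFna_kernel_def joint_kernel_def kernel_def by auto

lemma joint_kernel_normal:
  assumes G: "group G" and T: "group T" and \<Phi>: "\<Phi> \<subseteq> hom G T"
  shows "joint_kernel G T \<Phi> \<lhd> G"
proof -
  interpret G: group G by (rule G)
  let ?N = "joint_kernel G T \<Phi>"
  interpret T: group T by (rule T)
  have hom: "group_hom G T \<phi>" if "\<phi> \<in> \<Phi>" for \<phi>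
    using that \<Phi> G T by (auto intro!: group_hom.intro group_hom_axioms.intro)
  have "subgroup ?N G"
  proof (rule G.subgroupI)
    show "?N \<subseteq> carrier G" "?N \<noteq> {}"
      using group_hom.hom_one[OF hom] by (auto simp: joint_kernel_def)
  next
    fix a b assume ab: "a \<in> ?N" "b \<in> ?N"
    have "\<phi> (inv\<^bsub>G\<^esub> a) = \<one>\<^bsub>T\<^esub> \<and> \<phi> (a \<otimes>\<^bsub>G\<^esub> b) = \<one>\<^bsub>T\<^esub>" if \<phi>: "\<phi> \<in> \<Phi>" for \<phi>
    proof -
      interpret \<phi>: group_hom G T \<phi> by (rule hom[OF \<phi>])
      have "a \<in> carrier G" "b \<in> carrier G" "\<phi> a = \<one>\<^bsub>T\<^esub>" "\<phi> b = \<one>\<^bsub>T\<^esub>"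
        using ab \<phi> by (auto simp: joint_kernel_def)
      then show ?thesis by simp
    qed
    then show "inv\<^bsub>G\<^esub> a \<in> ?N" "a \<otimes>\<^bsub>G\<^esub> b \<in> ?N"
      using ab unfolding joint_kernel_def by (blast intro: G.inv_closed G.m_closed)+
  qed
  moreover have "x \<otimes>\<^bsub>G\<^esub> h \<otimes>\<^bsub>G\<^esub> inv\<^bsub>G\<^esub> x \<in> ?N" if "x \<in> carrier G" "h \<in> ?N" for x h
  proof -
    have "\<phi> (x \<otimes>\<^bsub>G\<^esub> h \<otimes>\<^bsub>G\<^esub> inv\<^bsub>G\<^esub> x) = \<one>\<^bsub>T\<^esub>" if \<phi>: "\<phi> \<in> \<Phi>" for \<phi>
    proof -
      interpret \<phi>: group_hom G T \<phi> by (rule hom[OF \<phi>])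
      have "h \<in> carrier G" "\<phi> h = \<one>\<^bsub>T\<^esub>" using \<open>h \<in> ?N\<close> \<phi> by (auto simp: joint_kernel_def)
      then show ?thesis using \<open>x \<in> carrier G\<close> by simp
    qed
    then show ?thesis using that by (simp add: joint_kernel_def)
  qed
  ultimately show ?thesis unfolding G.normal_inv_iff by blast
qed

lemma factor_through_epi:
  assumes G: "group G" and H: "group H" and T: "group T"
    and f: "f \<in> hom G H" and fs: "f ` carrier G = carrier H"
    and \<phi>: "\<phi> \<in> hom G T" and ker: "\<forall>k\<in>carrier G. f k = \<one>\<^bsub>H\<^esub> \<longrightarrow> \<phi> k = \<one>\<^bsub>T\<^esub>"
  shows "\<exists>\<psi>\<in>hom H T. \<forall>g\<in>carrier G. \<phi> g = \<psi> (f g)"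
proof -
  interpret G: group G by (rule G)
  interpret H: group H by (rule H)
  interpret T: group T by (rule T)
  interpret fh: group_hom G H f by (unfold_locales) (rule f)
  interpret ph: group_hom G T \<phi> by (unfold_locales) (rule \<phi>)
  define \<psi> where "\<psi> y = \<phi> (inv_into (carrier G) f y)" for y
  have eq: "\<phi> g = \<psi> (f g)" if g: "g \<in> carrier G" for g
  proof -
    define g' where "g' = inv_into (carrier G) f (f g)"
    have g': "g' \<in> carrier G" "f g' = f g"
      unfolding g'_def using g by (auto intro: inv_into_into f_inv_into_f)
    then have "f (g \<otimes>\<^bsub>G\<^esub> inv\<^bsub>G\<^esub> g') = \<one>\<^bsub>H\<^esub>" using g by simp
    then have "\<phi> (g \<otimes>\<^bsub>G\<^esub> inv\<^bsub>G\<^esub> g') = \<one>\<^bsub>T\<^esub>" using ker g g' by simp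
    then have "\<phi> g \<otimes>\<^bsub>T\<^esub> inv\<^bsub>T\<^esub> \<phi> g' = \<one>\<^bsub>T\<^esub>" using g g' by simp
    then have "\<phi> g = \<phi> g'" using g g' by (simp add: T.inv_solve_right')
    then show ?thesis unfolding \<psi>_def g'_def by simp
  qed
  have "\<psi> \<in> hom H T"
  proof (rule homI)
    fix x assume "x \<in> carrier H"
    then obtain a where "a \<in> carrier G" "x = f a" using fs by blast
    then show "\<psi> x \<in> carrier T" using eq by (metis ph.hom_closed)
  next
    fix x y assume "x \<in> carrier H" "y \<in> carrier H"
    then obtain a b where a: "a \<in> carrier G" "x = f a" and b: "b \<in> carrier G" "y = f b"
      using fs by (metis imageE)
    have "\<psi> (x \<otimes>\<^bsub>H\<^esub> y) = \<psi> (f (a \<otimes>\<^bsub>G\<^esub> b))" using a b by simp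
    also have "\<dots> = \<phi> a \<otimes>\<^bsub>T\<^esub> \<phi> b" using a b eq[of "a \<otimes>\<^bsub>G\<^esub> b", symmetric] by simp
    also have "\<dots> = \<psi> x \<otimes>\<^bsub>T\<^esub> \<psi> y" using a b eq by simp
    finally show "\<psi> (x \<otimes>\<^bsub>H\<^esub> y) = \<psi> x \<otimes>\<^bsub>T\<^esub> \<psi> y" .
  qed
  then show ?thesis using eq by blast
qed

lemma induced_iso_joint_kernel_iff:
  assumes G: "group G" and H: "group H" and T: "group T"
    and f: "f \<in> hom G H" and fs: "f ` carrier G = carrier H"
    and \<Phi>G: "\<Phi>G \<subseteq> hom G T" and \<Phi>H: "\<Phi>H \<subseteq> hom H T"
    and pull: "\<And>\<psi>. \<psi> \<in> \<Phi>H \<Longrightarrow> \<psi> \<circ> f \<in> \<Phi>G"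
    and push: "\<And>\<phi> \<psi>. \<phi> \<in> \<Phi>G \<Longrightarrow> \<psi> \<in> hom H T \<Longrightarrow> \<forall>g\<in>carrier G. \<phi> g = \<psi> (f g) \<Longrightarrow> \<psi> \<in> \<Phi>H"
  shows "induced_quot G H (joint_kernel G T \<Phi>G) (joint_kernel H T \<Phi>H) f
           \<in> iso (G Mod joint_kernel G T \<Phi>G) (H Mod joint_kernel H T \<Phi>H) \<longleftrightarrow>
         (\<forall>\<phi>\<in>\<Phi>G. \<forall>k\<in>carrier G. f k = \<one>\<^bsub>H\<^esub> \<longrightarrow> \<phi> k = \<one>\<^bsub>T\<^esub>)"
proof -
  interpret fh: group_hom G H f using G H f by (auto intro!: group_hom.intro group_hom_axioms.intro)
  let ?KG = "joint_kernel G T \<Phi>G" and ?KH = "joint_kernel H T \<Phi>H"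
  have KL: "\<forall>k\<in>?KG. f k \<in> ?KH"
  proof
    fix k assume k: "k \<in> ?KG"
    have "\<psi> (f k) = \<one>\<^bsub>T\<^esub>" if "\<psi> \<in> \<Phi>H" for \<psi>
      using pull[OF that] k by (auto simp: joint_kernel_def)
    then show "f k \<in> ?KH" using k by (auto simp: joint_kernel_def)
  qed
  have oneKH: "\<one>\<^bsub>H\<^esub> \<in> ?KH"
    using \<Phi>H H T by (auto simp: joint_kernel_def intro: group_hom.hom_one group_hom.intro group_hom_axioms.intro)
  have "(\<forall>g\<in>carrier G. f g \<in> ?KH \<longrightarrow> g \<in> ?KG) \<longleftrightarrow>
        (\<forall>\<phi>\<in>\<Phi>G. \<forall>k\<in>carrier G. f k = \<one>\<^bsub>H\<^esub> \<longrightarrow> \<phi> k = \<one>\<^bsub>T\<^esub>)"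
  proof (intro iffI ballI impI)
    fix \<phi> k assume "\<forall>g\<in>carrier G. f g \<in> ?KH \<longrightarrow> g \<in> ?KG" "\<phi> \<in> \<Phi>G" "k \<in> carrier G" "f k = \<one>\<^bsub>H\<^esub>"
    then show "\<phi> k = \<one>\<^bsub>T\<^esub>" using oneKH by (auto simp: joint_kernel_def)
  next
    fix g assume kill: "\<forall>\<phi>\<in>\<Phi>G. \<forall>k\<in>carrier G. f k = \<one>\<^bsub>H\<^esub> \<longrightarrow> \<phi> k = \<one>\<^bsub>T\<^esub>"
      and g: "g \<in> carrier G" and fg: "f g \<in> ?KH"
    have "\<phi> g = \<one>\<^bsub>T\<^esub>" if \<phi>: "\<phi> \<in> \<Phi>G" for \<phi>
    proof -
      obtain \<psi> where \<psi>: "\<psi> \<in> hom H T" "\<forall>g\<in>carrier G. \<phi> g = \<psi> (f g)"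
        using factor_through_epi[OF G H T f fs] \<phi> \<Phi>G kill by blast
      then have "\<psi> \<in> \<Phi>H" using push \<phi> by blast
      then show ?thesis using \<psi>(2) g fg by (simp add: joint_kernel_def)
    qed
    then show "g \<in> ?KG" using g by (simp add: joint_kernel_def)
  qed
  moreover have "?KG \<lhd> G" "?KH \<lhd> H"
    using joint_kernel_normal G H T \<Phi>G \<Phi>H by blast+
  ultimately show ?thesis using induced_iso[OF G H _ _ f KL fs] by blast
qed

lemma nonabelian_image_comp_epi:
  assumes "f ` carrier G = carrier H"
  shows "nonabelian_image G (\<psi> \<circ> f) \<longleftrightarrow> nonabelian_image H \<psi>"
proof
  assume "nonabelian_image H \<psi>"
  then obtain x y where "x \<in> carrier H" "y \<in> carrier H" "\<psi> x \<otimes>\<^bsub>F2\<^esub> \<psi> y \<noteq> \<psi> y \<otimes>\<^bsub>F2\<^esub> \<psi> x"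
    unfolding nonabelian_image_def by blast
  moreover obtain a b where "a \<in> carrier G" "b \<in> carrier G" "x = f a" "y = f b"
    using assms calculation(1,2) by (metis imageE)
  ultimately show "nonabelian_image G (\<psi> \<circ> f)" unfolding nonabelian_image_def by auto
qed (use assms in \<open>auto simp: nonabelian_image_def\<close>)

section \<open>Homomorphisms with abelian image and the first Betti number\<close>

lemma commutative_image_kills_derived:
  assumes G: "group G" and T: "group T" and \<phi>: "\<phi> \<in> hom G T"
    and comm: "\<forall>x\<in>carrier G. \<forall>y\<in>carrier G. \<phi> x \<otimes>\<^bsub>T\<^esub> \<phi> y = \<phi> y \<otimes>\<^bsub>T\<^esub> \<phi> x"
    and d: "d \<in> derived G (carrier G)"
  shows "\<phi> d = \<one>\<^bsub>T\<^esub>"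
proof -
  interpret G: group G by (rule G)
  interpret T: group T by (rule T)
  interpret \<phi>: group_hom G T \<phi> by (unfold_locales) (rule \<phi>)
  have "derived_set G (carrier G) \<subseteq> kernel G T \<phi>"
  proof
    fix z assume "z \<in> derived_set G (carrier G)"
    then obtain a b where ab: "a \<in> carrier G" "b \<in> carrier G"
      "z = a \<otimes>\<^bsub>G\<^esub> b \<otimes>\<^bsub>G\<^esub> inv\<^bsub>G\<^esub> a \<otimes>\<^bsub>G\<^esub> inv\<^bsub>G\<^esub> b" by blast
    have "\<phi> z = \<phi> b \<otimes>\<^bsub>T\<^esub> \<phi> a \<otimes>\<^bsub>T\<^esub> inv\<^bsub>T\<^esub> \<phi> a \<otimes>\<^bsub>T\<^esub> inv\<^bsub>T\<^esub> \<phi> b"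
      using ab comm by simp
    also have "\<dots> = \<one>\<^bsub>T\<^esub>" using ab by (simp add: T.m_assoc)
    finally show "z \<in> kernel G T \<phi>" using ab by (simp add: kernel_def)
  qed
  then have "derived G (carrier G) \<subseteq> kernel G T \<phi>"
    unfolding derived_def by (rule G.generate_subgroup_incl) (rule \<phi>.subgroup_kernel)
  then show ?thesis using d by (auto simp: kernel_def)
qed

lemma finitely_generated_quotient:
  assumes G: "group G" and N: "normal N G" and fg: "finitely_generated G"
  shows "finitely_generated (G Mod N)"
proof -
  interpret G: group G by (rule G)
  interpret N: normal N G by (rule N)
  interpret Q: group "G Mod N" by (rule N.factorgroup_is_group)
  interpret \<pi>: group_hom G "G Mod N" "\<lambda>a. N #>\<^bsub>G\<^esub> a"
    by (unfold_locales) (rule N.r_coset_hom_Mod)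
  obtain Gs where Gs: "finite Gs" "Gs \<subseteq> carrier G" "generate G Gs = carrier G"
    using fg unfolding finitely_generated_def by blast
  have "generate (G Mod N) ((\<lambda>a. N #>\<^bsub>G\<^esub> a) ` Gs) = (\<lambda>a. N #>\<^bsub>G\<^esub> a) ` generate G Gs"
    using \<pi>.generate_img[OF Gs(2)] .
  also have "\<dots> = carrier (G Mod N)" using Gs(3) by (simp add: carrier_FactGroup)
  finally show ?thesis unfolding finitely_generated_def
    using Gs by (intro exI[of _ "(\<lambda>a. N #>\<^bsub>G\<^esub> a) ` Gs"]) (auto simp: carrier_FactGroup)
qed

lemma cyclic_hom_from_additive:
  assumes add: "\<forall>a\<in>carrier G. \<forall>b\<in>carrier G. \<psi> (a \<otimes>\<^bsub>G\<^esub> b) = \<psi> a + \<psi> b"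
    and w: "w \<in> carrier F2"
  shows "(\<lambda>g. w [^]\<^bsub>F2\<^esub> (\<psi> g :: int)) \<in> hom G F2"
    and "\<not> nonabelian_image G (\<lambda>g. w [^]\<^bsub>F2\<^esub> (\<psi> g :: int))"
proof -
  show "(\<lambda>g. w [^]\<^bsub>F2\<^esub> (\<psi> g :: int)) \<in> hom G F2"
    by (rule homI) (use add w in \<open>simp_all add: F2.int_pow_mult\<close>)
  have "w [^]\<^bsub>F2\<^esub> m \<otimes>\<^bsub>F2\<^esub> w [^]\<^bsub>F2\<^esub> n = w [^]\<^bsub>F2\<^esub> n \<otimes>\<^bsub>F2\<^esub> w [^]\<^bsub>F2\<^esub> m" for m n :: int
    using F2.int_pow_mult[OF w, of m n] F2.int_pow_mult[OF w, of n m] by (simp add: add.commute)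
  then show "\<not> nonabelian_image G (\<lambda>g. w [^]\<^bsub>F2\<^esub> (\<psi> g :: int))"
    unfolding nonabelian_image_def by blast
qed

text \<open>One direction uses torsion-freeness
  of F2; for the other, an additive map detecting k (which exists as G^ab is finitely generated)
  gives a homomorphism onto a cyclic subgroup of F2.\<close>
lemma abelian_homs_kill_iff_finite_order:
  assumes G: "group G" and fg: "finitely_generated G" and k: "k \<in> carrier G"
  shows "(\<forall>\<phi>\<in>hom G F2. \<not> nonabelian_image G \<phi> \<longrightarrow> \<phi> k = \<one>\<^bsub>F2\<^esub>) \<longleftrightarrow>
         \<not> infinite_order (abelianization G) (derived G (carrier G) #>\<^bsub>G\<^esub> k)"
proof -
  interpret G: group G by (rule G)
  define D where "D = derived G (carrier G)"
  define A where "A = abelianization G"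
  interpret D: normal D G unfolding D_def by (rule G.derived_self_is_normal)
  interpret A: comm_group A unfolding A_def abelianization_def by (rule G.derived_quot_is_comm_group)
  interpret \<pi>: group_hom G A "\<lambda>g. D #>\<^bsub>G\<^esub> g" unfolding A_def abelianization_def D_def[symmetric]
    by (intro group_hom.intro group_hom_axioms.intro G D.factorgroup_is_group D.r_coset_hom_Mod)
  have fgA: "finitely_generated A"
    unfolding A_def abelianization_def D_def[symmetric] by (rule finitely_generated_quotient[OF G _ fg]) unfold_locales
  have oneA: "\<one>\<^bsub>A\<^esub> = D" unfolding A_def abelianization_def D_def by simp
  show ?thesis unfolding D_def[symmetric] A_def[symmetric]
  proof
    assume kill: "\<forall>\<phi>\<in>hom G F2. \<not> nonabelian_image G \<phi> \<longrightarrow> \<phi> k = \<one>\<^bsub>F2\<^esub>"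
    show "\<not> infinite_order A (D #>\<^bsub>G\<^esub> k)"
    proof
      assume inf: "infinite_order A (D #>\<^bsub>G\<^esub> k)"
      have kA: "D #>\<^bsub>G\<^esub> k \<in> carrier A" using \<pi>.hom_closed[OF k] .
      obtain \<psi> :: "'a set \<Rightarrow> int" where
        \<psi>: "\<forall>a\<in>carrier A. \<forall>b\<in>carrier A. \<psi> (a \<otimes>\<^bsub>A\<^esub> b) = \<psi> a + \<psi> b" "\<psi> (D #>\<^bsub>G\<^esub> k) \<noteq> 0"
        using A.infinite_order_detected[OF fgA kA inf] by blast
      define w :: "letter list" where "w = [(True, True)]"
      have w: "w \<in> carrier F2" "w \<noteq> \<one>\<^bsub>F2\<^esub>" by (simp_all add: w_def F2_simps)
      have "\<forall>a\<in>carrier G. \<forall>b\<in>carrier G.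
          \<psi> (D #>\<^bsub>G\<^esub> (a \<otimes>\<^bsub>G\<^esub> b)) = \<psi> (D #>\<^bsub>G\<^esub> a) + \<psi> (D #>\<^bsub>G\<^esub> b)"
        using \<psi>(1) \<pi>.hom_mult \<pi>.hom_closed by metis
      note \<Phi> = cyclic_hom_from_additive[OF this w(1)]
      have "w [^]\<^bsub>F2\<^esub> \<psi> (D #>\<^bsub>G\<^esub> k) = \<one>\<^bsub>F2\<^esub>" using kill \<Phi> k by blast
      then show False using torsion_freeD[OF F2_torsion_free w(1) \<psi>(2)] w(2) by blast
    qed
  next
    assume "\<not> infinite_order A (D #>\<^bsub>G\<^esub> k)"
    then obtain n :: int where n: "n \<noteq> 0" "(D #>\<^bsub>G\<^esub> k) [^]\<^bsub>A\<^esub> n = \<one>\<^bsub>A\<^esub>"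
      unfolding infinite_order_def by blast
    then have "D #>\<^bsub>G\<^esub> (k [^]\<^bsub>G\<^esub> n) = D" using \<pi>.hom_int_pow[OF k] oneA by simp
    then have kn: "k [^]\<^bsub>G\<^esub> n \<in> D" using G.rcos_self[of "k [^]\<^bsub>G\<^esub> n" D] D.subgroup_axioms k by simp
    show "\<forall>\<phi>\<in>hom G F2. \<not> nonabelian_image G \<phi> \<longrightarrow> \<phi> k = \<one>\<^bsub>F2\<^esub>"
    proof (intro ballI impI)
      fix \<phi> assume \<phi>: "\<phi> \<in> hom G F2" and ab: "\<not> nonabelian_image G \<phi>"
      interpret \<phi>: group_hom G F2 \<phi> by (unfold_locales) (rule \<phi>)
      have "\<phi> (k [^]\<^bsub>G\<^esub> n) = \<one>\<^bsub>F2\<^esub>"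
        using commutative_image_kills_derived[OF G F2_group \<phi> _ kn[unfolded D_def]] ab
        unfolding nonabelian_image_def by blast
      then have "\<phi> k [^]\<^bsub>F2\<^esub> n = \<one>\<^bsub>F2\<^esub>" using \<phi>.hom_int_pow[OF k] by simp
      then show "\<phi> k = \<one>\<^bsub>F2\<^esub>" using torsion_freeD[OF F2_torsion_free _ n(1)] k by simp
    qed
  qed
qed

lemma coset_kernel_representative:
  assumes G: "group G" and H: "group H" and K: "subgroup K G" and f: "f \<in> hom G H"
    and KL: "f ` K = L" and g: "g \<in> carrier G" and fg: "f g \<in> L"
  shows "\<exists>k\<in>carrier G. f k = \<one>\<^bsub>H\<^esub> \<and> K #>\<^bsub>G\<^esub> k = K #>\<^bsub>G\<^esub> g"
proof -
  interpret G: group G by (rule G)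
  interpret K: subgroup K G by (rule K)
  interpret fh: group_hom G H f using G H f by (auto intro!: group_hom.intro group_hom_axioms.intro)
  have "f g \<in> f ` K" using KL fg by simp
  then obtain d where d: "d \<in> K" "f d = f g" by (auto elim: imageE)
  have dc: "d \<in> carrier G" using d(1) K.subset by blast
  define k where "k = inv\<^bsub>G\<^esub> d \<otimes>\<^bsub>G\<^esub> g"
  have kc: "k \<in> carrier G" unfolding k_def using dc g by simp
  have "f k = \<one>\<^bsub>H\<^esub>" unfolding k_def using dc g d(2) by simp
  moreover have "K #>\<^bsub>G\<^esub> k = (K #>\<^bsub>G\<^esub> inv\<^bsub>G\<^esub> d) #>\<^bsub>G\<^esub> g"
    unfolding k_def by (rule G.coset_mult_assoc[OF K.subset G.inv_closed[OF dc] g, symmetric])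
  moreover have "K #>\<^bsub>G\<^esub> inv\<^bsub>G\<^esub> d = K" using K.rcos_const[OF G K.m_inv_closed[OF d(1)]] .
  ultimately show ?thesis using kc by auto
qed

lemma induced_quot_kernel:
  assumes G: "group G" and H: "group H" and K: "K \<lhd> G" and L: "L \<lhd> H"
    and f: "f \<in> hom G H" and KL: "f ` K = L" and y: "y \<in> carrier (G Mod K)"
  shows "induced_quot G H K L f y = \<one>\<^bsub>H Mod L\<^esub> \<longleftrightarrow>
         (\<exists>k\<in>carrier G. f k = \<one>\<^bsub>H\<^esub> \<and> y = K #>\<^bsub>G\<^esub> k)"
proof -
  interpret H: group H by (rule H)
  interpret K: normal K G by (rule K)
  interpret L: normal L H by (rule L)
  interpret fh: group_hom G H f using G H f by (auto intro!: group_hom.intro group_hom_axioms.intro)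
  have KL': "\<forall>k\<in>K. f k \<in> L" using KL by blast
  note val = induced_val[OF G H K L f KL']
  have "y \<in> (#>\<^bsub>G\<^esub>) K ` carrier G" using y by (simp add: carrier_FactGroup)
  then obtain g where "y = K #>\<^bsub>G\<^esub> g" "g \<in> carrier G" by (rule imageE)
  then have g: "g \<in> carrier G" "y = K #>\<^bsub>G\<^esub> g" by simp_all
  have "induced_quot G H K L f y = \<one>\<^bsub>H Mod L\<^esub> \<longleftrightarrow> f g \<in> L"
  proof -
    have "induced_quot G H K L f y = L #>\<^bsub>H\<^esub> f g" using val[OF g(1)] g(2) by simp
    moreover have "L #>\<^bsub>H\<^esub> f g = L \<longleftrightarrow> f g \<in> L"
      using H.rcos_self[OF fh.hom_closed[OF g(1)] L.subgroup_axioms] L.rcos_const[OF H] by auto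
    ultimately show ?thesis by simp
  qed
  also have "\<dots> \<longleftrightarrow> (\<exists>k\<in>carrier G. f k = \<one>\<^bsub>H\<^esub> \<and> y = K #>\<^bsub>G\<^esub> k)"
  proof
    assume "f g \<in> L"
    then obtain k where "k \<in> carrier G" "f k = \<one>\<^bsub>H\<^esub>" "K #>\<^bsub>G\<^esub> k = K #>\<^bsub>G\<^esub> g"
      using coset_kernel_representative[OF G H K.subgroup_axioms f KL g(1)] by blast
    then show "\<exists>k\<in>carrier G. f k = \<one>\<^bsub>H\<^esub> \<and> y = K #>\<^bsub>G\<^esub> k" using g(2) by auto
  next
    assume "\<exists>k\<in>carrier G. f k = \<one>\<^bsub>H\<^esub> \<and> y = K #>\<^bsub>G\<^esub> k"
    then obtain k where k: "k \<in> carrier G" "f k = \<one>\<^bsub>H\<^esub>" "K #>\<^bsub>G\<^esub> k = K #>\<^bsub>G\<^esub> g"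
      using g(2) by auto
    then have "L #>\<^bsub>H\<^esub> f g = L #>\<^bsub>H\<^esub> f k" using val[OF g(1)] val[OF k(1)] by simp
    then show "f g \<in> L"
      using H.rcos_self[OF fh.hom_closed[OF g(1)] L.subgroup_axioms] L.rcos_const[OF H L.one_closed] k(2)
      by simp
  qed
  finally show ?thesis .
qed

lemma b1_eq_iff_kernel_torsion:
  assumes G: "group G" and H: "group H"
    and fgG: "finitely_generated G" and fgH: "finitely_generated H"
    and f: "f \<in> hom G H" and fs: "f ` carrier G = carrier H"
  shows "b1 G = b1 H \<longleftrightarrow>
    (\<forall>k\<in>carrier G. f k = \<one>\<^bsub>H\<^esub> \<longrightarrow> \<not> infinite_order (abelianization G) (derived G (carrier G) #>\<^bsub>G\<^esub> k))"
proof -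
  interpret G: group G by (rule G)
  interpret H: group H by (rule H)
  interpret fh: group_hom G H f by (unfold_locales) (rule f)
  define DG where "DG = derived G (carrier G)"
  define DH where "DH = derived H (carrier H)"
  define A where "A = G Mod DG"
  define B where "B = H Mod DH"
  define p where "p = induced_quot G H DG DH f"
  interpret DG: normal DG G unfolding DG_def by (rule G.derived_self_is_normal)
  interpret DH: normal DH H unfolding DH_def by (rule H.derived_self_is_normal)
  have DH_img: "f ` DG = DH" unfolding DH_def DG_def using fh.derived_img[of "carrier G"] fs by simp
  then have DG_DH: "\<forall>k\<in>DG. f k \<in> DH" by blast
  have "comm_group A" "comm_group B" unfolding A_def B_def DG_def DH_def
    by (rule G.derived_quot_is_comm_group H.derived_quot_is_comm_group)+
  moreover have "p \<in> hom A B" "p ` carrier A = carrier B"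
    unfolding p_def A_def B_def
    using induced_hom[OF G H DG.normal_axioms DH.normal_axioms f DG_DH]
      induced_surj[OF G H DG.normal_axioms DH.normal_axioms f DG_DH fs] by auto
  moreover have "finitely_generated A" "finitely_generated B" unfolding A_def B_def
    by (rule finitely_generated_quotient[OF G DG.normal_axioms fgG]
             finitely_generated_quotient[OF H DH.normal_axioms fgH])+
  ultimately interpret E: epi_ab A B p by (simp add: epi_ab_def epi_ab_axioms_def)
  have kernel_p: "p y = \<one>\<^bsub>B\<^esub> \<longleftrightarrow> (\<exists>k\<in>carrier G. f k = \<one>\<^bsub>H\<^esub> \<and> y = DG #>\<^bsub>G\<^esub> k)"
    if "y \<in> carrier A" for y
    unfolding p_def A_def B_def
    by (rule induced_quot_kernel[OF G H DG.normal_axioms DH.normal_axioms f DH_img that[unfolded A_def]])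
  have "b1 G = b1 H \<longleftrightarrow> torsion_free_rank A = torsion_free_rank B"
    by (simp add: b1_def abelianization_def A_def B_def DG_def DH_def)
  also have "\<dots> \<longleftrightarrow> (\<forall>y\<in>carrier A. p y = \<one>\<^bsub>B\<^esub> \<longrightarrow> \<not> infinite_order A y)"
    by (rule E.rank_eq_iff_kernel_torsion)
  also have "\<dots> \<longleftrightarrow> (\<forall>k\<in>carrier G. f k = \<one>\<^bsub>H\<^esub> \<longrightarrow> \<not> infinite_order A (DG #>\<^bsub>G\<^esub> k))"
    using kernel_p by (auto simp: A_def carrier_FactGroup)
  finally show ?thesis by (simp add: A_def DG_def abelianization_def)
qed

text \<open>By the transfer principle the three conditions say that all, resp. the non-abelian,
  resp. the abelian homomorphisms G \<rightarrow> F2 vanish on the kernel of f.\<close>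
theorem mainTheorem5:
  fixes G :: "('a, 'b) monoid_scheme" and H :: "('c, 'd) monoid_scheme" and f :: "'a \<Rightarrow> 'c"
  assumes "group G" and "group H"
    and "finitely_generated G" and "finitely_generated H"
    and "f \<in> epi G H"
  shows "f_RF G H f \<in> iso (RF G) (RF H) \<longleftrightarrow>
           (f_na G H f \<in> iso (RFna G) (RFna H) \<and> b1 G = b1 H)"
proof -
  have f: "f \<in> hom G H" and fs: "f ` carrier G = carrier H" using assms(5) by (auto simp: epi_def)
  let ?kills = "\<lambda>\<phi>. \<forall>k\<in>carrier G. f k = \<one>\<^bsub>H\<^esub> \<longrightarrow> \<phi> k = \<one>\<^bsub>F2\<^esub>"
  have RF_iff: "f_RF G H f \<in> iso (RF G) (RF H) \<longleftrightarrow> (\<forall>\<phi>\<in>hom G F2. ?kills \<phi>)"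
    unfolding f_RF_def RF_def RF_kernel_joint
    by (rule induced_iso_joint_kernel_iff[OF assms(1,2) F2_group f fs]) (auto intro: hom_compose[OF f])
  have na_iff: "f_na G H f \<in> iso (RFna G) (RFna H) \<longleftrightarrow>
      (\<forall>\<phi>\<in>hom G F2. nonabelian_image G \<phi> \<longrightarrow> ?kills \<phi>)"
  proof -
    have "nonabelian_image H \<psi>"
      if "nonabelian_image G \<phi>" "\<forall>g\<in>carrier G. \<phi> g = \<psi> (f g)" for \<phi> \<psi>
      using that nonabelian_image_comp_epi[OF fs, of \<psi>] unfolding nonabelian_image_def by auto
    then show ?thesis unfolding f_na_def RFna_def RFna_kernel_joint
      by (subst induced_iso_joint_kernel_iff[OF assms(1,2) F2_group f fs])
         (auto intro: hom_compose[OF f] simp: nonabelian_image_comp_epi[OF fs])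
  qed
  have b1_iff: "b1 G = b1 H \<longleftrightarrow> (\<forall>\<phi>\<in>hom G F2. \<not> nonabelian_image G \<phi> \<longrightarrow> ?kills \<phi>)"
    using b1_eq_iff_kernel_torsion[OF assms(1-4) f fs]
      abelian_homs_kill_iff_finite_order[OF assms(1,3)] by blast
  show ?thesis using RF_iff na_iff b1_iff by blast
qed

end
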